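(* Suppose $F\in\mathcal A$. There exists $\epsilon>0$ such that for every $n$ there is a holomorphic function $f_n$ on $\{|z|<\epsilon\}$ with $f_n(0)=w_n$ whose graph $\Sigma_n=\{(z,f_n(z)):|z|<\epsilon\}$ is a preimage of $\Sigma_0$, i.e. $F^k(\Sigma_n)\subset\Sigma_0$ for some $k\ge 0$. The graphs $\Sigma_n$ are pairwise disjoint, and there are no other points $(z,w)$ with $|z|<\epsilon$ lying in $\bigcup_{k\ge0}F^{-k}(\Sigma_0)$ besides those on the graphs $\Sigma_n$.
   Context: Let $F(z,w)=(P(z),Q(z,w))$ be a polynomial skew product of $\mathbb C^2$. Let $U=\{z\in\mathbb C: P^n(z)\to 0\}$ be the basin of attraction of $0$ for $P$, let $\Omega=\{(z,w)\in\mathbb C^2: F^n(z,w)\to(0,0)\}$ be the basin of attraction of $(0,0)$ for $F$, and for $z\in\mathbb C$ let $\Omega_z=\{w\in\mathbb C:(z,w)\in\Omega\}$ be the slice of $\Omega$ over $z$. We say $F$ belongs to the class $\mathcal A$ if: (i) $P$ is a polynomial of degree $d\ge 2$ with $P(0)=0$ and $0<|P'(0)|=a<1$; (ii) writing $Q(z,w)=\sum_{j=0}^d Q_j(w)z^j$ with polynomials $Q_j$, we have $\deg Q_j\le d-1$ for all $j\ge 1$, $Q_0(w)=Q(0,w)$ has degree exactly $d$, $Q_0(0)=0$, $0<|Q_0'(0)|=b<1$, $a<b$, and $\frac{\partial Q}{\partial z}(0,0)=0$ (so $(0,0)$ is an attracting fixed point of $F$); (iii) condition $\mathcal C$ holds: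 (C1) for every $z\in\partial U$ there is no $w$ with $(z,w)\in\overline{\Omega}$ and $\frac{\partial Q}{\partial w}(z,w)=0$; (C2) if $w\notin\Omega_0$ and $\frac{\partial Q}{\partial w}(0,w)=0$, then $w$ lies in the basin of infinity of $Q_0$ (i.e. $Q_0^n(w)\to\infty$); (C3) if $w\in\Omega_0$ and $\frac{\partial Q}{\partial w}(0,w)=0$, then $F^n(0,w)\neq(0,0)$ for all integers $n\ge1$; (C4) if $z\in U$ and $P'(z)=0$, then $P^n(z)\ne 0$ for all integers $n\ge 1$. Since $DF(0,0)$ is diagonal with eigenvalues $P'(0)$ and $Q_0'(0)$ of moduli $a<b<1$, $F$ has a local strong stable manifold $\Sigma$ at $(0,0)$: a complex curve through $(0,0)$ tangent to the $z$-axis, consisting of points whose orbits converge to $(0,0)$ at the faster rate. Near the origin it is a graph $\Sigma_0=\{(z,f_0(z)): |z|<\epsilon\}$ with $f_0$ holomorphic and $f_0(0)=0$. Let $(0,w_n)$, $n=0,1,2,\dots$, with $w_0=0$, enumerate the points of $\{0\}\times\mathbb C$ satisfying $F^k(0,w_n)=(0,0)$ for some $k\ge 0$ (the preimages of $(0,0)$ in the $w$-axis). *)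

theory Defs
  imports "HOL-Complex_Analysis.Complex_Analysis" "HOL-Computational_Algebra.Polynomial"
begin

text \<open>A polynomial skew product F(z,w) = (P(z), Q(z,w)) with
  Q(z,w) = sum_{j=0}^{d} Q_j(w) z^j, d = degree P.  The coefficient polynomials
  are given by a function Qc :: nat => complex poly (only j <= d is used).\<close>

definition Qval :: "complex poly \<Rightarrow> (nat \<Rightarrow> complex poly) \<Rightarrow> complex \<Rightarrow> complex \<Rightarrow> complex" where
  "Qval P Qc z w = (\<Sum>j\<le>degree P. poly (Qc j) w * z ^ j)"

definition Qw :: "complex poly \<Rightarrow> (nat \<Rightarrow> complex poly) \<Rightarrow> complex \<Rightarrow> complex \<Rightarrow> complex" where
  "Qw P Qc z w = (\<Sum>j\<le>degree P. poly (pderiv (Qc j)) w * z ^ j)"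

definition Qz :: "complex poly \<Rightarrow> (nat \<Rightarrow> complex poly) \<Rightarrow> complex \<Rightarrow> complex \<Rightarrow> complex" where
  "Qz P Qc z w = (\<Sum>j\<in>{1..degree P}. of_nat j * poly (Qc j) w * z ^ (j - 1))"

definition skew :: "complex poly \<Rightarrow> (nat \<Rightarrow> complex poly) \<Rightarrow> complex \<times> complex \<Rightarrow> complex \<times> complex" where
  "skew P Qc = (\<lambda>(z, w). (poly P z, Qval P Qc z w))"

definition basinP :: "complex poly \<Rightarrow> complex set" where
  "basinP P = {z. (\<lambda>n. (poly P ^^ n) z) \<longlonglongrightarrow> 0}"

definition basinF :: "complex poly \<Rightarrow> (nat \<Rightarrow> complex poly) \<Rightarrow> (complex \<times> complex) set" where
  "basinF P Qc = {p. (\<lambda>n. (skew P Qc ^^ n) p) \<longlonglongrightarrow> (0, 0)}"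

definition slice :: "(complex \<times> complex) set \<Rightarrow> complex \<Rightarrow> complex set" where
  "slice S z = {w. (z, w) \<in> S}"

definition condC :: "complex poly \<Rightarrow> (nat \<Rightarrow> complex poly) \<Rightarrow> bool" where
  "condC P Qc \<longleftrightarrow>
     (\<forall>z\<in>frontier (basinP P). \<forall>w. (z, w) \<in> closure (basinF P Qc) \<longrightarrow> Qw P Qc z w \<noteq> 0) \<and>
     (\<forall>w. w \<notin> slice (basinF P Qc) 0 \<and> Qw P Qc 0 w = 0 \<longrightarrow>
          filterlim (\<lambda>n. (poly (Qc 0) ^^ n) w) at_infinity sequentially) \<and>
     (\<forall>w. w \<in> slice (basinF P Qc) 0 \<and> Qw P Qc 0 w = 0 \<longrightarrow>
          (\<forall>n\<ge>1. (skew P Qc ^^ n) (0, w) \<noteq> (0, 0))) \<and>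
     (\<forall>z. z \<in> basinP P \<and> poly (pderiv P) z = 0 \<longrightarrow> (\<forall>n\<ge>1. (poly P ^^ n) z \<noteq> 0))"

definition classA :: "complex poly \<Rightarrow> (nat \<Rightarrow> complex poly) \<Rightarrow> bool" where
  "classA P Qc \<longleftrightarrow>
     (let d = degree P; a = norm (poly (pderiv P) 0); b = norm (poly (pderiv (Qc 0)) 0) in
       d \<ge> 2 \<and> poly P 0 = 0 \<and> 0 < a \<and> a < 1 \<and>
       (\<forall>j\<in>{1..d}. degree (Qc j) \<le> d - 1) \<and>
       degree (Qc 0) = d \<and> poly (Qc 0) 0 = 0 \<and> 0 < b \<and> b < 1 \<and> a < b \<and>
       Qz P Qc 0 0 = 0 \<and>
       condC P Qc)"

definition fast_conv :: "complex poly \<Rightarrow> (nat \<Rightarrow> complex poly) \<Rightarrow> complex \<times> complex \<Rightarrow> bool" where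
  "fast_conv P Qc p \<longleftrightarrow>
     (\<exists>\<rho> C. 0 < \<rho> \<and> \<rho> < norm (poly (pderiv (Qc 0)) 0) \<and>
        (\<forall>n. norm ((skew P Qc ^^ n) p) \<le> C * \<rho> ^ n))"

text \<open>f0 on the disc of radius e0 parametrises the local strong stable manifold of
  (0,0) in the bidisc ball 0 e0 x ball 0 r: the points of the bidisc whose orbit
  stays in the bidisc and converges to (0,0) at the faster rate are exactly the
  points of the graph of f0.\<close>
definition local_strong_stable :: "complex poly \<Rightarrow> (nat \<Rightarrow> complex poly) \<Rightarrow> real \<Rightarrow> real \<Rightarrow> (complex \<Rightarrow> complex) \<Rightarrow> bool" where
  "local_strong_stable P Qc e0 r f0 \<longleftrightarrow>
     0 < e0 \<and> 0 < r \<and> f0 holomorphic_on ball 0 e0 \<and> f0 0 = 0 \<and> deriv f0 0 = 0 \<and>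
     (\<forall>z\<in>ball 0 e0. f0 z \<in> ball 0 r) \<and>
     (\<forall>z\<in>ball 0 e0. \<forall>w\<in>ball 0 r.
        w = f0 z \<longleftrightarrow>
        ((\<forall>n. (skew P Qc ^^ n) (z, w) \<in> ball 0 e0 \<times> ball 0 r) \<and> fast_conv P Qc (z, w)))"

definition graph_on :: "real \<Rightarrow> (complex \<Rightarrow> complex) \<Rightarrow> (complex \<times> complex) set" where
  "graph_on e f = {(z, f z) | z. z \<in> ball 0 e}"

end

theory Submission
  imports Defs
begin

(*
  Let Sigma_0 be the graph of f0 and W_K (disc_preimage K) the set of points over a small disc
  |z| < eps that F^K maps into Sigma_0.  Condition C keeps the critical points of Q(0, .) away from
  limits of preimages of Sigma_0, and orbits with large w escape; hence, for eps small, the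
  w-derivative of Q does not vanish on these preimages and their fibres are bounded.  W_K is the
  zero set of w_K(z, w) - f0 (P^K z), where w_K (orbit_w K) is the second coordinate of F^K; its
  w-derivative is the product of the w-derivatives of Q along the orbit, so by the implicit function
  theorem W_K is locally the graph of a holomorphic function.  Being closed with bounded fibres, W_K
  is then a covering of the disc, which is simply connected: W_K is the disjoint union of the graphs
  of its sections, one through each point (0, w_n).
*)

lemma norm_le_mult_norm_near_zero:
  fixes f :: "'a::real_normed_field \<Rightarrow> 'a"
  assumes "f 0 = 0" and "(f has_field_derivative D) (at 0)" and "norm D < c"
  shows "\<exists>\<delta>>0. \<forall>z. norm z < \<delta> \<longrightarrow> norm (f z) \<le> c * norm z"
proof -
  have "((\<lambda>z. f z / z) \<longlongrightarrow> D) (at 0)"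
    using assms(2) unfolding has_field_derivative_iff by (simp add: assms(1))
  then have "\<forall>\<^sub>F z in at 0. dist (f z / z) D < c - norm D"
    using assms(3) by (intro tendstoD) simp_all
  then obtain \<delta> where \<delta>: "\<delta> > 0" "\<And>z. z \<noteq> 0 \<Longrightarrow> norm z < \<delta> \<Longrightarrow> dist (f z / z) D < c - norm D"
    unfolding eventually_at by (auto simp: dist_norm)
  have "norm (f z) \<le> c * norm z" if "norm z < \<delta>" for z
  proof (cases "z = 0")
    case False
    have "norm (f z / z) \<le> norm D + dist (f z / z) D"
      by (metis dist_norm norm_triangle_sub)
    also have "\<dots> < c" using \<delta>(2)[OF False that] by simp
    finally show ?thesis using False by (simp add: norm_divide divide_less_eq less_imp_le)
  qed (simp add: assms(1))
  then show ?thesis using \<delta>(1) by blast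
qed

lemma norm_sum_power_le:
  fixes w :: "'a::real_normed_div_algebra"
  assumes "1 \<le> norm w"
  shows "norm (\<Sum>i\<le>n. a i * w ^ i) \<le> (\<Sum>i\<le>n. norm (a i)) * norm w ^ n"
proof -
  have "norm (\<Sum>i\<le>n. a i * w ^ i) \<le> (\<Sum>i\<le>n. norm (a i) * norm w ^ i)"
    by (rule norm_sum[THEN order_trans]) (simp add: norm_mult norm_power)
  also have "\<dots> \<le> (\<Sum>i\<le>n. norm (a i) * norm w ^ n)"
  proof (rule sum_mono)
    fix i assume "i \<in> {..n}"
    then have "norm w ^ i \<le> norm w ^ n" using assms by (intro power_increasing) auto
    then show "norm (a i) * norm w ^ i \<le> norm (a i) * norm w ^ n" by (simp add: mult_left_mono)
  qed
  finally show ?thesis by (simp add: sum_distrib_right)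
qed

lemma poly_eq_sum_upto:
  fixes p :: "'a::comm_semiring_1 poly"
  assumes "degree p \<le> n"
  shows "poly p w = (\<Sum>i\<le>n. coeff p i * w ^ i)"
  unfolding poly_altdef
  by (rule sum.mono_neutral_left) (use assms in \<open>auto simp: coeff_eq_0\<close>)

lemma norm_poly_le_coeff_sum:
  fixes p :: "'a::real_normed_field poly"
  assumes "norm w \<le> 1"
  shows "norm (poly p w) \<le> (\<Sum>i\<le>degree p. norm (coeff p i))"
  unfolding poly_altdef
  by (rule norm_sum[THEN order_trans], rule sum_mono)
     (auto simp: norm_mult norm_power intro!: mult_left_le power_le_one assms)

section \<open>Local graphs, the implicit function theorem and coverings\<close>

definition local_graph ::
    "('a::metric_space \<times> 'b::metric_space) set \<Rightarrow> 'a \<Rightarrow> 'b \<Rightarrow> real \<Rightarrow> real \<Rightarrow> ('a \<Rightarrow> 'b) \<Rightarrow> bool" where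
  "local_graph Z z0 u0 \<delta> \<eta> h \<longleftrightarrow> 0 < \<delta> \<and> 0 < \<eta> \<and> continuous_on (ball z0 \<delta>) h \<and> h z0 = u0 \<and>
     Z \<inter> (ball z0 \<delta> \<times> ball u0 \<eta>) = (\<lambda>z. (z, h z)) ` ball z0 \<delta>"

lemma local_graphD:
  assumes "local_graph Z z0 u0 \<delta> \<eta> h" and "z \<in> ball z0 \<delta>"
  shows "(z, h z) \<in> Z" and "\<And>u. (z, u) \<in> Z \<Longrightarrow> u \<in> ball u0 \<eta> \<Longrightarrow> u = h z"
  using assms unfolding local_graph_def by blast+

lemma local_graph_mono:
  assumes "local_graph Z z0 u0 \<delta> \<eta> h" and "0 < \<delta>'" and "\<delta>' \<le> \<delta>"
  shows "local_graph Z z0 u0 \<delta>' \<eta> h"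
proof -
  have "ball z0 \<delta>' \<subseteq> ball z0 \<delta>" using assms(3) by auto
  then show ?thesis
    using assms unfolding local_graph_def by (auto intro: continuous_on_subset)
qed

lemma local_graph_shrink:
  assumes "local_graph Z z0 u0 \<delta> \<eta> h" and "0 < \<eta>'" and "\<eta>' \<le> \<eta>"
  obtains \<delta>' where "\<delta>' \<le> \<delta>" and "local_graph Z z0 u0 \<delta>' \<eta>' h"
proof -
  have "isCont h z0"
    using assms(1) continuous_on_interior[of "ball z0 \<delta>" h z0] by (simp add: local_graph_def)
  then obtain d where d: "d > 0" "\<And>z. dist z z0 < d \<Longrightarrow> dist (h z) (h z0) < \<eta>'"
    using assms(2) unfolding continuous_at_eps_delta by blast
  define \<delta>' where "\<delta>' = min d \<delta>"
  have sub: "ball z0 \<delta>' \<subseteq> ball z0 \<delta>" by (auto simp: \<delta>'_def)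
  have "Z \<inter> (ball z0 \<delta>' \<times> ball u0 \<eta>') = (\<lambda>z. (z, h z)) ` ball z0 \<delta>'"
  proof
    show "Z \<inter> (ball z0 \<delta>' \<times> ball u0 \<eta>') \<subseteq> (\<lambda>z. (z, h z)) ` ball z0 \<delta>'"
      using local_graphD(2)[OF assms(1)] sub assms(3) by fastforce
    show "(\<lambda>z. (z, h z)) ` ball z0 \<delta>' \<subseteq> Z \<inter> (ball z0 \<delta>' \<times> ball u0 \<eta>')"
      using local_graphD(1)[OF assms(1)] sub d(2) assms(1)
      by (force simp: \<delta>'_def local_graph_def dist_commute)
  qed
  moreover have "local_graph Z z0 u0 \<delta>' \<eta> h"
    using d(1) assms(1) by (intro local_graph_mono[OF assms(1)]) (auto simp: \<delta>'_def local_graph_def)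
  ultimately have "local_graph Z z0 u0 \<delta>' \<eta>' h"
    using assms(2) by (simp add: local_graph_def)
  then show ?thesis using that[of \<delta>'] by (simp add: \<delta>'_def)
qed

lemma local_inverse_fst_Pair:
  fixes G A B :: "complex \<times> complex \<Rightarrow> complex"
  assumes S: "open S" "(z0, u0) \<in> S" and G0: "G (z0, u0) = 0"
    and G': "\<And>p. p \<in> S \<Longrightarrow> (G has_derivative (\<lambda>v. A p * fst v + B p * snd v)) (at p)"
    and cont: "continuous_on S A" "continuous_on S B"
    and B0: "B (z0, u0) \<noteq> 0"
  obtains U V g where "open U" "U \<subseteq> S" "(z0, u0) \<in> U" "open V" "(z0, 0) \<in> V"
    and "homeomorphism U V (\<lambda>p. (fst p, G p)) g"
    and "(g has_derivative (\<lambda>v. (fst v, (snd v - A (z0, u0) * fst v) / B (z0, u0)))) (at (z0, 0))"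
proof -
  define x0 where "x0 = (z0, u0)"
  define a0 where "a0 = A x0"
  define b0 where "b0 = B x0"
  have b0: "b0 \<noteq> 0" using B0 by (simp add: b0_def x0_def)
  define \<Phi> where "\<Phi> p = (fst p, G p)" for p
  have lin: "bounded_linear (\<lambda>v::complex \<times> complex. (fst v, a * fst v + b * snd v))" for a b
    by (intro bounded_linear_Pair bounded_linear_add bounded_linear_fst
        bounded_linear_compose[OF bounded_linear_mult_right bounded_linear_fst]
        bounded_linear_compose[OF bounded_linear_mult_right bounded_linear_snd])
  define \<Phi>' where "\<Phi>' p = Blinfun (\<lambda>v. (fst v, A p * fst v + B p * snd v))" for p
  have \<Phi>'_apply: "blinfun_apply (\<Phi>' p) = (\<lambda>v. (fst v, A p * fst v + B p * snd v))" for p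
    unfolding \<Phi>'_def by (rule bounded_linear_Blinfun_apply[OF lin])
  have \<Phi>_deriv: "(\<Phi> has_derivative blinfun_apply (\<Phi>' p)) (at p)" if "p \<in> S" for p
    unfolding \<Phi>'_apply \<Phi>_def[abs_def]
    using has_derivative_Pair[OF has_derivative_fst[OF has_derivative_ident] G'[OF that]] by simp
  have \<Phi>'_cont: "continuous_on S \<Phi>'"
  proof -
    have "isCont \<Phi>' p" if "p \<in> S" for p
    proof (rule continuous_blinfun_componentwiseI1)
      fix i :: "complex \<times> complex"
      have "isCont A p" "isCont B p"
        using cont that S(1) continuous_on_eq_continuous_at by blast+
      then show "continuous (at p) (\<lambda>x. blinfun_apply (\<Phi>' x) i)"
        unfolding \<Phi>'_apply by (intro continuous_intros)
    qed
    then show ?thesis using continuous_on_eq_continuous_at[OF S(1)] by blast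
  qed
  define k where "k v = (fst v, (snd v - a0 * fst v) / b0)" for v :: "complex \<times> complex"
  have \<Phi>'_x0: "blinfun_apply (\<Phi>' x0) = (\<lambda>v. (fst v, a0 * fst v + b0 * snd v))"
    by (simp add: \<Phi>'_apply a0_def b0_def)
  have k_left: "k (blinfun_apply (\<Phi>' x0) v) = v" and k_right: "blinfun_apply (\<Phi>' x0) (k v) = v" for v
    unfolding k_def \<Phi>'_x0 using b0 by (cases v; simp add: field_simps)+
  have "bounded_linear (\<lambda>v::complex \<times> complex. snd v - a0 * fst v)"
    by (intro bounded_linear_sub bounded_linear_snd
        bounded_linear_compose[OF bounded_linear_mult_right bounded_linear_fst])
  then have "bounded_linear k"
    unfolding k_def
    by (intro bounded_linear_Pair bounded_linear_fst bounded_linear_compose[OF bounded_linear_divide])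
  then have "Blinfun k o\<^sub>L \<Phi>' x0 = id_blinfun"
    by (intro blinfun_eqI) (simp add: bounded_linear_Blinfun_apply k_left)
  then obtain U V g g' where UV: "open U" "U \<subseteq> S" "x0 \<in> U" "open V" "\<Phi> x0 \<in> V"
      and hom: "homeomorphism U V \<Phi> g"
      and g': "\<And>y. y \<in> V \<Longrightarrow> (g has_derivative g' y) (at y)"
              "\<And>y. y \<in> V \<Longrightarrow> g' y = inv (blinfun_apply (\<Phi>' (g y)))"
    using inverse_function_theorem[OF S(1) \<Phi>_deriv \<Phi>'_cont] S(2) unfolding x0_def by metis
  have "g (\<Phi> x0) = x0" using hom UV(3) by (simp add: homeomorphism_def)
  then have "g' (\<Phi> x0) = inv (blinfun_apply (\<Phi>' x0))" using g'(2)[OF UV(5)] by simp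
  also have "\<dots> = k" by (rule inv_unique_comp) (auto simp: fun_eq_iff k_left k_right)
  finally have "(g has_derivative k) (at (\<Phi> x0))" using g'(1)[OF UV(5)] by simp
  moreover have "\<Phi> x0 = (z0, 0)" "\<Phi> = (\<lambda>p. (fst p, G p))" using G0 by (auto simp: \<Phi>_def x0_def)
  ultimately show ?thesis
    using that[OF UV(1,2) _ UV(4) _ hom[unfolded \<Phi>_def[abs_def]]] UV(3,5)
    by (simp add: x0_def k_def[abs_def] a0_def b0_def)
qed

lemma local_graph_of_local_inverse:
  fixes G :: "complex \<times> complex \<Rightarrow> complex"
  assumes UV: "open U" "U \<subseteq> S" "(z0, u0) \<in> U" "open V" "(z0, 0) \<in> V"
    and hom: "homeomorphism U V (\<lambda>p. (fst p, G p)) g" and G0: "G (z0, u0) = 0"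
  obtains \<delta> \<eta> where "local_graph {p \<in> S. G p = 0} z0 u0 \<delta> \<eta> (\<lambda>z. snd (g (z, 0)))"
proof -
  define h where "h z = snd (g (z, 0))" for z
  have g_cont: "continuous_on V g" and g_inv: "\<And>p. p \<in> U \<Longrightarrow> g (fst p, G p) = p"
    and inv_g: "\<And>y. y \<in> V \<Longrightarrow> (fst (g y), G (g y)) = y" and g_V: "\<And>y. y \<in> V \<Longrightarrow> g y \<in> U"
    using hom unfolding homeomorphism_def by auto
  obtain \<rho> where \<rho>: "\<rho> > 0" "ball (z0, u0) \<rho> \<subseteq> U" using UV(1,3) open_contains_ball by blast
  obtain \<rho>' where \<rho>': "\<rho>' > 0" "ball (z0, 0) \<rho>' \<subseteq> V" using UV(4,5) open_contains_ball by blast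
  have in_V: "(z, 0) \<in> V" if "z \<in> ball z0 \<rho>'" for z
    using \<rho>'(2) that by (auto simp: dist_Pair_Pair dist_commute)
  have g_eq: "g (z, 0) = (z, h z)" and h_in_U: "(z, h z) \<in> U" and h_zero: "G (z, h z) = 0"
    if "z \<in> ball z0 \<rho>'" for z
  proof -
    have "(fst (g (z, 0)), G (g (z, 0))) = (z, 0)" using inv_g[OF in_V[OF that]] .
    then show g_eq: "g (z, 0) = (z, h z)" and "G (z, h z) = 0"
      unfolding h_def by (metis fst_conv prod.collapse snd_conv)+
    show "(z, h z) \<in> U" using g_V[OF in_V[OF that]] g_eq by simp
  qed
  have h_z0: "h z0 = u0" using g_inv[OF UV(3)] G0 by (simp add: h_def)
  have h_cont: "continuous_on (ball z0 \<rho>') h"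
  proof -
    have "continuous_on (ball z0 \<rho>') (\<lambda>z. g (z, 0))"
      using in_V by (intro continuous_on_compose2[OF g_cont]) (auto intro!: continuous_intros)
    then show ?thesis unfolding h_def by (intro continuous_intros)
  qed
  define \<eta> where "\<eta> = \<rho> / 2"
  have \<eta>: "\<eta> > 0" using \<rho>(1) by (simp add: \<eta>_def)
  have uniq: "u = h z" if "z \<in> ball z0 \<rho>'" "dist z0 z < \<eta>" "u \<in> ball u0 \<eta>" "G (z, u) = 0" for z u
  proof -
    have "dist (z0, u0) (z, u) \<le> dist z0 z + dist u0 u"
      unfolding dist_Pair_Pair by (rule sqrt_sum_squares_le_sum) auto
    then have "(z, u) \<in> U" using that(2,3) \<rho>(2) by (force simp: \<eta>_def)
    then have "g (z, 0) = (z, u)" using g_inv that(4) by force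
    then show ?thesis using g_eq[OF that(1)] by simp
  qed
  have "isCont h z0" using h_cont \<rho>'(1) continuous_on_interior by fastforce
  then obtain \<delta>1 where \<delta>1: "\<delta>1 > 0" "\<And>z. dist z z0 < \<delta>1 \<Longrightarrow> dist (h z) u0 < \<eta>"
    using \<eta> h_z0 unfolding continuous_at_eps_delta by metis
  define \<delta> where "\<delta> = min \<delta>1 (min \<rho>' \<eta>)"
  have \<delta>: "\<delta> > 0" "ball z0 \<delta> \<subseteq> ball z0 \<rho>'" using \<delta>1(1) \<rho>'(1) \<eta> by (auto simp: \<delta>_def)
  have "{p \<in> S. G p = 0} \<inter> (ball z0 \<delta> \<times> ball u0 \<eta>) = (\<lambda>z. (z, h z)) ` ball z0 \<delta>"
  proof
    show "{p \<in> S. G p = 0} \<inter> (ball z0 \<delta> \<times> ball u0 \<eta>) \<subseteq> (\<lambda>z. (z, h z)) ` ball z0 \<delta>"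
      using uniq \<delta>(2) by (force simp: \<delta>_def)
    show "(\<lambda>z. (z, h z)) ` ball z0 \<delta> \<subseteq> {p \<in> S. G p = 0} \<inter> (ball z0 \<delta> \<times> ball u0 \<eta>)"
      using h_in_U h_zero \<delta>(2) \<delta>1(2) UV(2) by (force simp: \<delta>_def dist_commute)
  qed
  then have "local_graph {p \<in> S. G p = 0} z0 u0 \<delta> \<eta> h"
    using \<delta> \<eta> h_z0 continuous_on_subset[OF h_cont \<delta>(2)] by (simp add: local_graph_def)
  then show ?thesis using that by (simp add: h_def[abs_def])
qed

lemma implicit_function_complex:
  fixes G A B :: "complex \<times> complex \<Rightarrow> complex"
  assumes S: "open S" "(z0, u0) \<in> S" and G0: "G (z0, u0) = 0"
    and G': "\<And>p. p \<in> S \<Longrightarrow> (G has_derivative (\<lambda>v. A p * fst v + B p * snd v)) (at p)"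
    and cont: "continuous_on S A" "continuous_on S B"
    and B0: "B (z0, u0) \<noteq> 0"
  obtains \<delta> \<eta> h where "local_graph {p \<in> S. G p = 0} z0 u0 \<delta> \<eta> h"
    and "(h has_field_derivative - A (z0, u0) / B (z0, u0)) (at z0)"
proof -
  obtain U V g where UV: "open U" "U \<subseteq> S" "(z0, u0) \<in> U" "open V" "(z0, 0) \<in> V"
    and hom: "homeomorphism U V (\<lambda>p. (fst p, G p)) g"
    and g': "(g has_derivative (\<lambda>v. (fst v, (snd v - A (z0, u0) * fst v) / B (z0, u0)))) (at (z0, 0))"
    using local_inverse_fst_Pair[OF S G0 G' cont B0] by blast
  obtain \<delta> \<eta> where "local_graph {p \<in> S. G p = 0} z0 u0 \<delta> \<eta> (\<lambda>z. snd (g (z, 0)))"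
    using local_graph_of_local_inverse[OF UV hom G0] by blast
  moreover have "((\<lambda>z. snd (g (z, 0))) has_field_derivative - A (z0, u0) / B (z0, u0)) (at z0)"
  proof -
    have "((\<lambda>z. g (z, 0)) has_derivative (\<lambda>d. (d, - A (z0, u0) * d / B (z0, u0)))) (at z0)"
      using has_derivative_compose[OF has_derivative_Pair[OF has_derivative_ident has_derivative_const] g']
      by simp
    from has_derivative_snd[OF this] show ?thesis
      unfolding has_field_derivative_def by (rule has_derivative_eq_rhs) (auto simp: fun_eq_iff)
  qed
  ultimately show ?thesis using that by blast
qed

lemma closedin_Times_UNIV_limit:
  fixes Z :: "('a::metric_space \<times> 'b::metric_space) set"
  assumes "closedin (top_of_set (T \<times> UNIV)) Z" and "\<And>n. (zs n, us n) \<in> Z"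
    and "zs \<longlonglongrightarrow> z" and "us \<longlonglongrightarrow> u" and "z \<in> T"
  shows "(z, u) \<in> Z"
proof -
  obtain C where C: "closed C" "Z = (T \<times> UNIV) \<inter> C" using assms(1) closedin_closed by metis
  have "(z, u) \<in> C"
    using closed_sequentially[OF C(1) _ tendsto_Pair[OF assms(3,4)]] assms(2) C(2) by blast
  then show ?thesis using C(2) assms(5) by simp
qed

lemma convergent_subsequence_in_fibre:
  fixes Z :: "('a::metric_space \<times> 'b::heine_borel) set"
  assumes "closedin (top_of_set (T \<times> UNIV)) Z" and "bounded (snd ` Z)"
    and "\<And>n. (zs n, us n) \<in> Z" and "zs \<longlonglongrightarrow> z" and "z \<in> T"
  obtains u r where "strict_mono r" "(us \<circ> r) \<longlonglongrightarrow> u" "(z, u) \<in> Z"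
proof -
  have "range us \<subseteq> snd ` Z" using assms(3) by (metis image_subsetI snd_conv rev_image_eqI)
  then obtain u r where r: "strict_mono r" "(us \<circ> r) \<longlonglongrightarrow> u"
    using bounded_imp_convergent_subsequence bounded_subset[OF assms(2)] by metis
  have "(z, u) \<in> Z"
    using closedin_Times_UNIV_limit[OF assms(1), of "zs \<circ> r" "us \<circ> r"] assms(3,5) r
      LIMSEQ_subseq_LIMSEQ[OF assms(4) r(1)] by simp
  then show ?thesis using that r by blast
qed

lemma tendsto_of_dist_less_inverse:
  fixes zs :: "nat \<Rightarrow> 'a::metric_space"
  assumes "\<And>n. dist (zs n) z < inverse (real (Suc n))"
  shows "zs \<longlonglongrightarrow> z"
proof -
  have bound: "norm (dist (zs n) z) \<le> inverse (real (Suc n))" for n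
    using assms[of n] by (simp only: real_norm_def abs_of_nonneg[OF zero_le_dist] less_imp_le)
  have "(\<lambda>n. dist (zs n) z) \<longlonglongrightarrow> 0"
    by (rule Lim_null_comparison[OF always_eventually LIMSEQ_inverse_real_of_nat]) (use bound in blast)
  then show ?thesis by (rule tendsto_dist_iff[THEN iffD2])
qed

lemma near_fibre_eventually:
  fixes Z :: "('a::metric_space \<times> 'b::heine_borel) set"
  assumes "closedin (top_of_set (T \<times> UNIV)) Z" and "bounded (snd ` Z)"
    and "z0 \<in> T" and "\<eta> > 0"
  obtains \<delta> where "\<delta> > 0"
    and "\<And>z y. dist z z0 < \<delta> \<Longrightarrow> (z, y) \<in> Z \<Longrightarrow> \<exists>u. (z0, u) \<in> Z \<and> dist y u < \<eta>"
proof (rule ccontr)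
  assume "\<not> thesis"
  then have "\<forall>n. \<exists>p. dist (fst p) z0 < inverse (real (Suc n)) \<and> p \<in> Z \<and>
      (\<forall>u. (z0, u) \<in> Z \<longrightarrow> \<eta> \<le> dist (snd p) u)"
    using that by (force simp: not_less)
  then obtain ps where ps: "\<And>n. dist (fst (ps n)) z0 < inverse (real (Suc n))" "\<And>n. ps n \<in> Z"
      "\<And>n u. (z0, u) \<in> Z \<Longrightarrow> \<eta> \<le> dist (snd (ps n)) u"
    unfolding choice_iff by blast
  define zs where "zs n = fst (ps n)" for n
  define us where "us n = snd (ps n)" for n
  have seq: "\<And>n. dist (zs n) z0 < inverse (real (Suc n))" "\<And>n. (zs n, us n) \<in> Z"
      "\<And>n u. (z0, u) \<in> Z \<Longrightarrow> \<eta> \<le> dist (us n) u"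
    using ps by (simp_all add: zs_def us_def)
  obtain u r where r: "strict_mono r" "(us \<circ> r) \<longlonglongrightarrow> u" "(z0, u) \<in> Z"
    using convergent_subsequence_in_fibre[OF assms(1,2) seq(2)
        tendsto_of_dist_less_inverse[OF seq(1)] assms(3)] .
  obtain n where "dist (us (r n)) u < \<eta>"
    using tendstoD[OF r(2) assms(4)] by (auto simp: eventually_sequentially)
  then show False using seq(3)[OF r(3)] by (simp add: not_le[symmetric])
qed

lemma finite_fibre_of_local_graphs:
  fixes Z :: "('a::metric_space \<times> 'b::heine_borel) set"
  assumes "closedin (top_of_set (T \<times> UNIV)) Z" and "bounded (snd ` Z)" and "z0 \<in> T"
    and loc: "\<And>z u. (z, u) \<in> Z \<Longrightarrow> \<exists>\<delta> \<eta> h. local_graph Z z u \<delta> \<eta> h"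
  shows "finite {u. (z0, u) \<in> Z}"
proof (rule ccontr)
  define Fb where "Fb = {u. (z0, u) \<in> Z}"
  assume "infinite {u. (z0, u) \<in> Z}"
  moreover have "bounded Fb"
    by (rule bounded_subset[OF assms(2)]) (force simp: Fb_def)
  ultimately obtain c where c: "c islimpt Fb" using bounded_infinite_imp_islimpt Fb_def by blast
  obtain C where C: "closed C" "Z = (T \<times> UNIV) \<inter> C" using assms(1) closedin_closed by metis
  have "Fb = Pair z0 -` C" using C(2) assms(3) by (auto simp: Fb_def)
  moreover have "continuous (at u) (Pair z0)" for u :: 'b by (intro continuous_intros)
  ultimately have "closed Fb" using continuous_closed_vimage[OF C(1)] by metis
  then have "(z0, c) \<in> Z" using c closed_limpt Fb_def by blast
  then obtain \<delta> \<eta> h where gr: "local_graph Z z0 c \<delta> \<eta> h" using loc by blast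
  then obtain u where "u \<in> Fb" "u \<noteq> c" "dist u c < \<eta>"
    using c unfolding islimpt_approachable local_graph_def by blast
  moreover have "u = h z0" if "u \<in> Fb" "dist u c < \<eta>" for u
    using local_graphD(2)[OF gr, of z0 u] gr that by (simp add: Fb_def local_graph_def dist_commute)
  ultimately show False using gr by (simp add: local_graph_def)
qed

lemma fst_image_of_local_graphs:
  fixes Z :: "('a::metric_space \<times> 'b::heine_borel) set"
  assumes T: "connected T" and Z: "Z \<subseteq> T \<times> UNIV" "Z \<noteq> {}"
    and closed: "closedin (top_of_set (T \<times> UNIV)) Z" and bounded: "bounded (snd ` Z)"
    and loc: "\<And>z u. (z, u) \<in> Z \<Longrightarrow> \<exists>\<delta> \<eta> h. local_graph Z z u \<delta> \<eta> h"
  shows "fst ` Z = T"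
proof -
  have sub: "fst ` Z \<subseteq> T" using Z(1) by auto
  have "open (fst ` Z)"
  proof (rule openI)
    fix z assume "z \<in> fst ` Z"
    then obtain u where "(z, u) \<in> Z" by force
    then obtain \<delta> \<eta> h where gr: "local_graph Z z u \<delta> \<eta> h" using loc by blast
    then have "ball z \<delta> \<subseteq> fst ` Z" using local_graphD(1)[OF gr] by force
    then show "\<exists>e>0. ball z e \<subseteq> fst ` Z" using gr by (auto simp: local_graph_def)
  qed
  then have "openin (top_of_set T) (fst ` Z)" using sub by (simp add: open_subset)
  moreover have "closedin (top_of_set T) (fst ` Z)"
    unfolding closedin_limpt
  proof (intro conjI allI impI sub)
    fix z assume z: "z islimpt fst ` Z \<and> z \<in> T"
    then obtain zs where zs: "\<And>n. zs n \<in> fst ` Z - {z}" "zs \<longlonglongrightarrow> z" using islimpt_sequential by metis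
    have "\<forall>n. \<exists>u. (zs n, u) \<in> Z" using zs(1) by force
    then obtain us where "\<And>n. (zs n, us n) \<in> Z" by metis
    then obtain u r where "(z, u) \<in> Z"
      using convergent_subsequence_in_fibre[OF closed bounded _ zs(2)] z by blast
    then show "z \<in> fst ` Z" by force
  qed
  ultimately show ?thesis using T Z(2) sub unfolding connected_clopen by blast
qed

lemma local_graph_homeomorphism:
  assumes "local_graph Z z0 u0 \<delta> \<eta> h"
  shows "homeomorphism (Z \<inter> (ball z0 \<delta> \<times> ball u0 \<eta>)) (ball z0 \<delta>) fst (\<lambda>z. (z, h z))"
  using assms unfolding local_graph_def homeomorphism_def
  by (auto intro!: continuous_intros simp: image_image)

lemma local_graphs_common_radius:
  fixes Z :: "('a::metric_space \<times> 'b::metric_space) set"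
  assumes fin: "finite Fb" and loc: "\<And>u. u \<in> Fb \<Longrightarrow> \<exists>\<delta> \<eta> h. local_graph Z z0 u \<delta> \<eta> h"
    and d: "0 < d"
  obtains \<delta> \<eta> h where "0 < \<delta>" "\<delta> \<le> d" "0 < \<eta>" "\<And>u v. u \<in> Fb \<Longrightarrow> v \<in> Fb \<Longrightarrow> u \<noteq> v \<Longrightarrow> \<eta> + \<eta> \<le> dist u v"
    "\<And>u. u \<in> Fb \<Longrightarrow> local_graph Z z0 u \<delta> \<eta> (h u)"
proof -
  have "\<forall>u\<in>Fb. \<exists>\<eta>' \<delta> h. local_graph Z z0 u \<delta> \<eta>' h" using loc by blast
  then obtain \<eta>0 where \<eta>0: "\<And>u. u \<in> Fb \<Longrightarrow> \<exists>\<delta> h. local_graph Z z0 u \<delta> (\<eta>0 u) h"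
    by (metis bchoice)
  define E where "E = insert 1 (\<eta>0 ` Fb \<union> (\<lambda>(u, v). dist u v / 2) ` {(u, v) \<in> Fb \<times> Fb. u \<noteq> v})"
  define \<eta> where "\<eta> = Min E"
  have fin_E: "finite E" unfolding E_def using fin by (auto intro: finite_subset[of _ "Fb \<times> Fb"])
  have "\<eta>0 u > 0" if "u \<in> Fb" for u using \<eta>0[OF that] by (auto simp: local_graph_def)
  then have \<eta>: "\<eta> > 0" unfolding \<eta>_def E_def using fin_E[unfolded E_def] by (auto simp: Min_gr_iff)
  have \<eta>_le: "\<eta> \<le> x" if "x \<in> E" for x unfolding \<eta>_def by (rule Min_le[OF fin_E that])
  have \<eta>_sep: "\<eta> + \<eta> \<le> dist u v" if "u \<in> Fb" "v \<in> Fb" "u \<noteq> v" for u v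
    using \<eta>_le[of "dist u v / 2"] that unfolding E_def by (force intro!: image_eqI[of _ _ "(u, v)"])
  have "\<forall>u\<in>Fb. \<exists>\<delta> h. local_graph Z z0 u \<delta> \<eta> h"
  proof
    fix u assume u: "u \<in> Fb"
    then obtain \<delta> h where gr: "local_graph Z z0 u \<delta> (\<eta>0 u) h" using \<eta>0 by blast
    have "\<eta> \<le> \<eta>0 u" using \<eta>_le u by (auto simp: E_def)
    then obtain \<delta>' where "local_graph Z z0 u \<delta>' \<eta> h" using local_graph_shrink[OF gr \<eta>] by blast
    then show "\<exists>\<delta> h. local_graph Z z0 u \<delta> \<eta> h" by blast
  qed
  then obtain \<delta>0 where "\<forall>u\<in>Fb. \<exists>h. local_graph Z z0 u (\<delta>0 u) \<eta> h"
    by (metis bchoice)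
  then obtain h where gr0: "\<And>u. u \<in> Fb \<Longrightarrow> local_graph Z z0 u (\<delta>0 u) \<eta> (h u)"
    by (metis bchoice)
  define \<delta> where "\<delta> = Min (insert d (\<delta>0 ` Fb))"
  have fin_D: "finite (insert d (\<delta>0 ` Fb))" using fin by simp
  have "\<delta>0 u > 0" if "u \<in> Fb" for u using gr0[OF that] by (simp add: local_graph_def)
  then have \<delta>: "\<delta> > 0" using fin_D d by (auto simp: \<delta>_def Min_gr_iff)
  have \<delta>_le: "\<delta> \<le> x" if "x \<in> insert d (\<delta>0 ` Fb)" for x
    unfolding \<delta>_def by (rule Min_le[OF fin_D that])
  have "local_graph Z z0 u \<delta> \<eta> (h u)" if "u \<in> Fb" for u
    using local_graph_mono[OF gr0[OF that] \<delta> \<delta>_le] that by simp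
  then show ?thesis using that[of \<delta> \<eta> h] \<delta> \<delta>_le \<eta> \<eta>_sep by simp
qed

lemma covering_space_fst_of_local_graphs:
  fixes Z :: "('a::metric_space \<times> 'b::heine_borel) set"
  assumes T: "open T" "connected T" and Z: "Z \<subseteq> T \<times> UNIV" "Z \<noteq> {}"
    and closed: "closedin (top_of_set (T \<times> UNIV)) Z" and bounded: "bounded (snd ` Z)"
    and loc: "\<And>z u. (z, u) \<in> Z \<Longrightarrow> \<exists>\<delta> \<eta> h. local_graph Z z u \<delta> \<eta> h"
  shows "covering_space Z fst T"
  unfolding covering_space_def
proof (intro conjI ballI)
  show "continuous_on Z fst" by (intro continuous_intros)
  show "fst ` Z = T" by (rule fst_image_of_local_graphs[OF T(2) Z closed bounded loc])
  fix z0 assume z0: "z0 \<in> T"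
  define Fb where "Fb = {u. (z0, u) \<in> Z}"
  have fin: "finite Fb"
    unfolding Fb_def by (rule finite_fibre_of_local_graphs[OF closed bounded z0 loc])
  obtain d where d: "d > 0" "ball z0 d \<subseteq> T" using T(1) z0 open_contains_ball by blast
  obtain \<delta> \<eta> h where \<delta>: "0 < \<delta>" "\<delta> \<le> d" and \<eta>: "0 < \<eta>"
    and sep: "\<And>u v. u \<in> Fb \<Longrightarrow> v \<in> Fb \<Longrightarrow> u \<noteq> v \<Longrightarrow> \<eta> + \<eta> \<le> dist u v"
    and gr: "\<And>u. u \<in> Fb \<Longrightarrow> local_graph Z z0 u \<delta> \<eta> (h u)"
    using local_graphs_common_radius[OF fin _ d(1), of Z z0] loc unfolding Fb_def by blast
  obtain \<delta>' where \<delta>': "\<delta>' > 0"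
    "\<And>z y. dist z z0 < \<delta>' \<Longrightarrow> (z, y) \<in> Z \<Longrightarrow> \<exists>u. (z0, u) \<in> Z \<and> dist y u < \<eta>"
    using near_fibre_eventually[OF closed bounded z0 \<eta>] by blast
  define U where "U = ball z0 (min \<delta> \<delta>')"
  have gr': "local_graph Z z0 u (min \<delta> \<delta>') \<eta> (h u)" if "u \<in> Fb" for u
    using local_graph_mono[OF gr[OF that]] \<delta>(1) \<delta>'(1) by simp
  define sheet where "sheet u = Z \<inter> (U \<times> ball u \<eta>)" for u
  show "\<exists>U. z0 \<in> U \<and> openin (top_of_set T) U \<and>
      (\<exists>v. \<Union>v = Z \<inter> fst -` U \<and> (\<forall>u\<in>v. openin (top_of_set Z) u) \<and> pairwise disjnt v \<and>
        (\<forall>u\<in>v. \<exists>q. homeomorphism u U fst q))"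
  proof (intro exI conjI)
    show "z0 \<in> U" using \<delta>(1) \<delta>'(1) by (simp add: U_def)
    show "openin (top_of_set T) U" using \<delta>(2) d(2) by (intro open_subset) (auto simp: U_def)
    show "\<Union> (sheet ` Fb) = Z \<inter> fst -` U"
    proof
      show "\<Union> (sheet ` Fb) \<subseteq> Z \<inter> fst -` U" by (auto simp: sheet_def)
      show "Z \<inter> fst -` U \<subseteq> \<Union> (sheet ` Fb)"
      proof clarify
        fix z y assume zy: "(z, y) \<in> Z" "fst (z, y) \<in> U"
        then obtain u where "u \<in> Fb" "dist y u < \<eta>"
          using \<delta>'(2)[of z y] by (auto simp: dist_commute Fb_def U_def)
        then show "(z, y) \<in> \<Union> (sheet ` Fb)" using zy by (auto simp: sheet_def dist_commute)
      qed
    qed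
    show "\<forall>V\<in>sheet ` Fb. openin (top_of_set Z) V"
      unfolding sheet_def U_def by (auto intro: openin_open_Int open_Times)
    show "pairwise disjnt (sheet ` Fb)"
    proof (rule pairwise_imageI)
      fix u v assume "u \<in> Fb" "v \<in> Fb" "u \<noteq> v"
      then have "ball u \<eta> \<inter> ball v \<eta> = {}" using sep by (intro disjoint_ballI) auto
      then show "disjnt (sheet u) (sheet v)" by (auto simp: disjnt_def sheet_def)
    qed
    show "\<forall>V\<in>sheet ` Fb. \<exists>q. homeomorphism V U fst q"
      using local_graph_homeomorphism[OF gr'] unfolding sheet_def U_def by blast
  qed
qed

lemma covering_space_fst_section:
  fixes Z :: "('a::real_normed_vector \<times> 'b::real_normed_vector) set"
  assumes cov: "covering_space Z fst T" and T: "simply_connected T" "locally path_connected T"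
    and p: "(z1, u1) \<in> Z"
  obtains h where "continuous_on T h" "h z1 = u1" "\<And>z. z \<in> T \<Longrightarrow> (z, h z) \<in> Z"
proof -
  have z1: "z1 \<in> T" using covering_space_imp_surjective[OF cov] p by force
  obtain g where g: "continuous_on T g" "g \<in> T \<rightarrow> Z" "g z1 = (z1, u1)" "\<And>z. z \<in> T \<Longrightarrow> fst (g z) = z"
    by (rule covering_space_lift_strong[OF cov p z1 T, of "\<lambda>z. z"]) (auto intro: continuous_on_id)
  have "g z = (z, snd (g z))" if "z \<in> T" for z using g(4)[OF that] by (metis prod.collapse)
  then show ?thesis
    using that[of "\<lambda>z. snd (g z)"] g continuous_on_snd by (force simp: Pi_iff)
qed

lemma covering_space_fst_section_unique:
  fixes Z :: "('a::real_normed_vector \<times> 'b::real_normed_vector) set"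
  assumes cov: "covering_space Z fst T" and "connected T"
    and "continuous_on T h1" "\<And>z. z \<in> T \<Longrightarrow> (z, h1 z) \<in> Z"
    and "continuous_on T h2" "\<And>z. z \<in> T \<Longrightarrow> (z, h2 z) \<in> Z"
    and "z1 \<in> T" "h1 z1 = h2 z1" "z \<in> T"
  shows "h1 z = h2 z"
proof -
  have "(z, h1 z) = (z, h2 z)"
    by (rule covering_space_lift_unique[OF cov, of "\<lambda>z. (z, h1 z)" z1 "\<lambda>z. (z, h2 z)" T "\<lambda>z. z"])
       (use assms in \<open>auto intro!: continuous_intros\<close>)
  then show ?thesis by simp
qed

lemma holomorphic_on_of_local_graphs:
  fixes Z :: "(complex \<times> complex) set"
  assumes T: "open T" and f: "continuous_on T f" "\<And>z. z \<in> T \<Longrightarrow> (z, f z) \<in> Z"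
    and loc: "\<And>z u. (z, u) \<in> Z \<Longrightarrow> \<exists>\<delta> \<eta> h. local_graph Z z u \<delta> \<eta> h \<and> h field_differentiable (at z)"
  shows "f holomorphic_on T"
  unfolding holomorphic_on_def
proof
  fix z1 assume z1: "z1 \<in> T"
  obtain \<delta> \<eta> h where gr: "local_graph Z z1 (f z1) \<delta> \<eta> h" and dh: "h field_differentiable (at z1)"
    using loc f(2)[OF z1] by blast
  have "isCont f z1" using T f(1) z1 continuous_on_eq_continuous_at by blast
  moreover have "\<eta> > 0" using gr by (simp add: local_graph_def)
  ultimately obtain d1 where d1: "d1 > 0" "\<And>z. dist z z1 < d1 \<Longrightarrow> dist (f z) (f z1) < \<eta>"
    unfolding continuous_at_eps_delta by metis
  have "f z = h z" if "z \<in> T" "dist z z1 < min \<delta> d1" for z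
    using local_graphD(2)[OF gr _ f(2)] that d1(2)[of z] by (simp add: dist_commute)
  moreover have "h field_differentiable (at z1 within T)"
    using dh field_differentiable_at_within by blast
  ultimately show "f field_differentiable (at z1 within T)"
    using d1(1) gr z1 by (intro field_differentiable_transform_within[of "min \<delta> d1" z1 T h f])
      (auto simp: local_graph_def)
qed

section \<open>The skew product near the origin\<close>

locale skew_classA =
  fixes P :: "complex poly" and Qc :: "nat \<Rightarrow> complex poly"
    and e0 r :: real and f0 :: "complex \<Rightarrow> complex"
  assumes classA: "classA P Qc"
    and strong_stable: "local_strong_stable P Qc e0 r f0"
begin

abbreviation "F \<equiv> skew P Qc"

abbreviation "\<Sigma>0 \<equiv> graph_on e0 f0"

lemma degree_P_ge_2: "degree P \<ge> 2"
  and poly_P_0: "poly P 0 = 0"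
  and norm_P'_0_less_1: "norm (poly (pderiv P) 0) < 1"
  and norm_Q0'_0_less_1: "norm (poly (pderiv (Qc 0)) 0) < 1"
  and degree_Q0: "degree (Qc 0) = degree P"
  and degree_Qj: "j \<in> {1..degree P} \<Longrightarrow> degree (Qc j) \<le> degree P - 1"
  and poly_Q0_0: "poly (Qc 0) 0 = 0"
  using classA by (simp_all add: classA_def Let_def)

text \<open>Only the conditions (C2) and (C3) enter this local statement.\<close>

lemma critical_escapes:
  "w \<notin> slice (basinF P Qc) 0 \<Longrightarrow> Qw P Qc 0 w = 0 \<Longrightarrow>
     filterlim (\<lambda>n. (poly (Qc 0) ^^ n) w) at_infinity sequentially"
  and critical_not_preimage_origin:
  "w \<in> slice (basinF P Qc) 0 \<Longrightarrow> Qw P Qc 0 w = 0 \<Longrightarrow> n \<ge> 1 \<Longrightarrow> (F ^^ n) (0, w) \<noteq> (0, 0)"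
  using classA by (simp_all add: classA_def Let_def condC_def)

lemma e0_pos: "0 < e0" and r_pos: "0 < r" and f0_holomorphic: "f0 holomorphic_on ball 0 e0"
  and f0_0: "f0 0 = 0" and f0_in_ball: "\<And>z. z \<in> ball 0 e0 \<Longrightarrow> f0 z \<in> ball 0 r"
  and strong_stable_iff: "\<And>z w. z \<in> ball 0 e0 \<Longrightarrow> w \<in> ball 0 r \<Longrightarrow>
        w = f0 z \<longleftrightarrow> ((\<forall>n. (F ^^ n) (z, w) \<in> ball 0 e0 \<times> ball 0 r) \<and> fast_conv P Qc (z, w))"
  using strong_stable unfolding local_strong_stable_def by blast+

fun orbit_w :: "nat \<Rightarrow> complex \<Rightarrow> complex \<Rightarrow> complex" where
  "orbit_w 0 z u = u"
| "orbit_w (Suc n) z u = Qval P Qc ((poly P ^^ n) z) (orbit_w n z u)"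

lemma skew_iter: "(F ^^ n) (z, u) = ((poly P ^^ n) z, orbit_w n z u)"
  by (induction n) (auto simp: skew_def)

lemma poly_P_iter_0: "(poly P ^^ n) 0 = 0"
  by (induction n) (auto simp: poly_P_0)

lemma Qval_eq: "Qval P Qc z w = poly (Qc 0) w + (\<Sum>j\<in>{1..degree P}. poly (Qc j) w * z ^ j)"
  unfolding Qval_def atMost_atLeast0 by (subst sum.atLeast_Suc_atMost) auto

lemma Qval_0: "Qval P Qc 0 w = poly (Qc 0) w"
  by (simp add: Qval_eq)

lemma orbit_w_0: "orbit_w n 0 w = (poly (Qc 0) ^^ n) w"
  by (induction n) (simp_all add: poly_P_iter_0 Qval_0)

lemma skew_\<Sigma>0:
  assumes "q \<in> \<Sigma>0" shows "F q \<in> \<Sigma>0"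
proof -
  obtain z where z: "z \<in> ball 0 e0" "q = (z, f0 z)" using assms by (auto simp: graph_on_def)
  have orbit: "(\<forall>n. (F ^^ n) (z, f0 z) \<in> ball 0 e0 \<times> ball 0 r) \<and> fast_conv P Qc (z, f0 z)"
    using strong_stable_iff[OF z(1) f0_in_ball[OF z(1)]] by simp
  obtain z' w' where zw: "F q = (z', w')" by (cases "F q")
  have shift: "(F ^^ n) (z', w') = (F ^^ Suc n) q" for n
    by (metis zw funpow_Suc_right o_apply)
  have in_box: "z' \<in> ball 0 e0" "w' \<in> ball 0 r"
    using orbit shift[of 0] z(2) by (metis SigmaE2 funpow_0)+
  have "fast_conv P Qc (z', w')"
  proof -
    obtain \<rho> C where \<rho>: "0 < \<rho>" "\<rho> < norm (poly (pderiv (Qc 0)) 0)"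
      "\<forall>n. norm ((F ^^ n) (z, f0 z)) \<le> C * \<rho> ^ n"
      using orbit unfolding fast_conv_def by blast
    have "norm ((F ^^ n) (z', w')) \<le> (C * \<rho>) * \<rho> ^ n" for n
      using \<rho>(3)[rule_format, of "Suc n"] shift[of n] z(2) by (simp add: mult.assoc)
    then show ?thesis unfolding fast_conv_def using \<rho>(1,2) by blast
  qed
  moreover have "\<forall>n. (F ^^ n) (z', w') \<in> ball 0 e0 \<times> ball 0 r"
    using orbit shift z(2) by metis
  ultimately have "w' = f0 z'" using strong_stable_iff[OF in_box] by blast
  then show ?thesis using zw in_box by (auto simp: graph_on_def)
qed

lemma skew_iter_\<Sigma>0: "(F ^^ k) p \<in> \<Sigma>0 \<Longrightarrow> k \<le> m \<Longrightarrow> (F ^^ m) p \<in> \<Sigma>0"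
proof (induction m)
  case (Suc m)
  then show ?case using skew_\<Sigma>0[of "(F ^^ m) p"] by (cases "k = Suc m") auto
qed simp

definition preimages_\<Sigma>0 :: "(complex \<times> complex) set" where
  "preimages_\<Sigma>0 = {p. \<exists>k. (F ^^ k) p \<in> \<Sigma>0}"

lemma preimages_\<Sigma>0_iter: "p \<in> preimages_\<Sigma>0 \<Longrightarrow> (F ^^ n) p \<in> preimages_\<Sigma>0"
proof -
  assume "p \<in> preimages_\<Sigma>0"
  then obtain k where "(F ^^ k) p \<in> \<Sigma>0" by (auto simp: preimages_\<Sigma>0_def)
  then have "(F ^^ k) ((F ^^ n) p) \<in> \<Sigma>0"
    using skew_iter_\<Sigma>0[of k p "k + n"] by (simp add: funpow_add add.commute)
  then show ?thesis by (auto simp: preimages_\<Sigma>0_def)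
qed

lemma fast_conv_preimages_\<Sigma>0:
  assumes "p \<in> preimages_\<Sigma>0" shows "fast_conv P Qc p"
proof -
  obtain k where k: "(F ^^ k) p \<in> \<Sigma>0" using assms by (auto simp: preimages_\<Sigma>0_def)
  then obtain z where z: "z \<in> ball 0 e0" "(F ^^ k) p = (z, f0 z)" by (auto simp: graph_on_def)
  have "fast_conv P Qc (z, f0 z)" using strong_stable_iff[OF z(1) f0_in_ball[OF z(1)]] by simp
  then obtain \<rho> C where \<rho>: "0 < \<rho>" "\<rho> < norm (poly (pderiv (Qc 0)) 0)"
      "\<And>n. norm ((F ^^ n) (z, f0 z)) \<le> C * \<rho> ^ n"
    unfolding fast_conv_def by blast
  have \<rho>1: "\<rho> < 1" using \<rho>(2) norm_Q0'_0_less_1 by simp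
  have C: "0 \<le> C" using \<rho>(3)[of 0] by (metis norm_ge_zero order_trans mult.right_neutral power_0)
  \<comment> \<open>the first k points of the orbit are absorbed into the constant\<close>
  define M where "M = (\<Sum>n<k. norm ((F ^^ n) p))"
  have M: "0 \<le> M" unfolding M_def by (simp add: sum_nonneg)
  have "norm ((F ^^ n) p) \<le> (C + M) / \<rho> ^ k * \<rho> ^ n" for n
  proof (cases "k \<le> n")
    case True
    have "(F ^^ n) p = (F ^^ (n - k)) ((F ^^ k) p)"
      using True by (metis funpow_add le_add_diff_inverse2 o_apply)
    then have "norm ((F ^^ n) p) \<le> C * \<rho> ^ (n - k)" using \<rho>(3) z(2) by simp
    also have "\<dots> = C * \<rho> ^ n / \<rho> ^ k" using \<rho>(1) True by (simp add: power_diff)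
    also have "\<dots> \<le> (C + M) / \<rho> ^ k * \<rho> ^ n" using M \<rho>(1) by (simp add: divide_right_mono mult_right_mono)
    finally show ?thesis .
  next
    case False
    have "norm ((F ^^ n) p) \<le> M" unfolding M_def by (rule member_le_sum) (use False in auto)
    also have "\<dots> \<le> M * (\<rho> ^ n / \<rho> ^ k)"
    proof -
      have "\<rho> ^ k \<le> \<rho> ^ n" using False \<rho>(1) \<rho>1 by (intro power_decreasing) auto
      then have "1 \<le> \<rho> ^ n / \<rho> ^ k" using \<rho>(1) by simp
      then show ?thesis using M by (metis mult.right_neutral mult_left_mono)
    qed
    also have "\<dots> \<le> (C + M) / \<rho> ^ k * \<rho> ^ n" using C \<rho>(1)
      by (simp add: divide_right_mono mult_right_mono field_simps)
    finally show ?thesis .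
  qed
  then show ?thesis unfolding fast_conv_def using \<rho>(1,2) by blast
qed

lemma poly_P_shrinks: obtains \<delta> where "\<delta> > 0" "\<And>z. norm z < \<delta> \<Longrightarrow> norm (poly P z) \<le> norm z"
  using norm_le_mult_norm_near_zero[OF poly_P_0 poly_DERIV norm_P'_0_less_1] by auto

lemma Qval_minus_Q0_bound:
  obtains M where "M \<ge> 0"
    "\<And>z w. norm z \<le> 1 \<Longrightarrow> norm w \<le> 1 \<Longrightarrow> norm (Qval P Qc z w - poly (Qc 0) w) \<le> M * norm z"
proof -
  define M where "M = (\<Sum>j\<in>{1..degree P}. \<Sum>i\<le>degree (Qc j). norm (coeff (Qc j) i))"
  have "M \<ge> 0" unfolding M_def by (intro sum_nonneg) auto
  moreover have "norm (Qval P Qc z w - poly (Qc 0) w) \<le> M * norm z"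
    if zw: "norm z \<le> 1" "norm w \<le> 1" for z w
  proof -
    have "norm (Qval P Qc z w - poly (Qc 0) w) = norm (\<Sum>j\<in>{1..degree P}. poly (Qc j) w * z ^ j)"
      by (simp add: Qval_eq)
    also have "\<dots> \<le> (\<Sum>j\<in>{1..degree P}. norm (poly (Qc j) w * z ^ j))" by (rule norm_sum)
    also have "\<dots> \<le> (\<Sum>j\<in>{1..degree P}. (\<Sum>i\<le>degree (Qc j). norm (coeff (Qc j) i)) * norm z)"
    proof (rule sum_mono)
      fix j assume j: "j \<in> {1..degree P}"
      have "norm z ^ j \<le> norm z ^ 1" using j zw(1) by (intro power_decreasing) auto
      then show "norm (poly (Qc j) w * z ^ j) \<le> (\<Sum>i\<le>degree (Qc j). norm (coeff (Qc j) i)) * norm z"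
        unfolding norm_mult norm_power
        by (intro mult_mono norm_poly_le_coeff_sum zw(2)) (auto intro: sum_nonneg)
    qed
    finally show ?thesis by (simp add: M_def sum_distrib_right)
  qed
  ultimately show ?thesis using that by blast
qed

lemma Qval_minus_leading_term_bound:
  obtains S where "\<And>z w. norm z \<le> 1 \<Longrightarrow> 1 \<le> norm w \<Longrightarrow>
    norm (Qval P Qc z w - lead_coeff (Qc 0) * w ^ degree P) \<le> S * norm w ^ (degree P - 1)"
proof -
  define m where "m = degree P - 1"
  have D: "degree P = Suc m" using degree_P_ge_2 by (simp add: m_def)
  define S where "S = (\<Sum>i\<le>m. norm (coeff (Qc 0) i)) + (\<Sum>j\<in>{1..degree P}. \<Sum>i\<le>m. norm (coeff (Qc j) i))"
  have "norm (Qval P Qc z w - lead_coeff (Qc 0) * w ^ degree P) \<le> S * norm w ^ (degree P - 1)"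
    if z: "norm z \<le> 1" and w: "1 \<le> norm w" for z w
  proof -
    have "poly (Qc 0) w = (\<Sum>i\<le>Suc m. coeff (Qc 0) i * w ^ i)"
      by (rule poly_eq_sum_upto) (simp add: degree_Q0 D)
    then have "Qval P Qc z w - lead_coeff (Qc 0) * w ^ degree P =
        (\<Sum>i\<le>m. coeff (Qc 0) i * w ^ i) + (\<Sum>j\<in>{1..degree P}. poly (Qc j) w * z ^ j)"
      by (simp add: Qval_eq degree_Q0 D)
    also have "norm \<dots> \<le> (\<Sum>i\<le>m. norm (coeff (Qc 0) i)) * norm w ^ m +
        (\<Sum>j\<in>{1..degree P}. (\<Sum>i\<le>m. norm (coeff (Qc j) i)) * norm w ^ m)"
    proof (rule norm_triangle_le[OF add_mono[OF norm_sum_power_le[OF w]]])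
      show "norm (\<Sum>j\<in>{1..degree P}. poly (Qc j) w * z ^ j) \<le>
          (\<Sum>j\<in>{1..degree P}. (\<Sum>i\<le>m. norm (coeff (Qc j) i)) * norm w ^ m)"
      proof (rule norm_sum[THEN order_trans], rule sum_mono)
        fix j assume j: "j \<in> {1..degree P}"
        have "norm (poly (Qc j) w) \<le> (\<Sum>i\<le>m. norm (coeff (Qc j) i)) * norm w ^ m"
          unfolding poly_eq_sum_upto[OF degree_Qj[OF j, folded m_def]] by (rule norm_sum_power_le[OF w])
        moreover have "norm (z ^ j) \<le> 1" using z by (simp add: norm_power power_le_one)
        ultimately show "norm (poly (Qc j) w * z ^ j) \<le> (\<Sum>i\<le>m. norm (coeff (Qc j) i)) * norm w ^ m"
          unfolding norm_mult by (metis mult_left_le norm_ge_zero order_trans)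
      qed
    qed
    finally show ?thesis by (simp add: S_def m_def sum_distrib_right distrib_right)
  qed
  then show ?thesis using that by blast
qed

lemma Qval_escape:
  obtains R0 where "R0 \<ge> 1" "\<And>z w. norm z \<le> 1 \<Longrightarrow> R0 \<le> norm w \<Longrightarrow> 2 * norm w \<le> norm (Qval P Qc z w)"
proof -
  obtain S where S: "\<And>z w. norm z \<le> 1 \<Longrightarrow> 1 \<le> norm w \<Longrightarrow>
      norm (Qval P Qc z w - lead_coeff (Qc 0) * w ^ degree P) \<le> S * norm w ^ (degree P - 1)"
    using Qval_minus_leading_term_bound by blast
  define c where "c = lead_coeff (Qc 0)"
  define m where "m = degree P - 1"
  have D: "degree P = Suc m" "1 \<le> m" using degree_P_ge_2 by (simp_all add: m_def)
  have "Qc 0 \<noteq> 0" using degree_Q0 degree_P_ge_2 by (metis degree_0 not_numeral_le_zero)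
  then have c: "c \<noteq> 0" by (simp add: c_def)
  define R0 where "R0 = max 1 ((S + 2) / norm c)"
  have "2 * norm w \<le> norm (Qval P Qc z w)" if z: "norm z \<le> 1" and w: "R0 \<le> norm w" for z w
  proof -
    have w1: "1 \<le> norm w" using w by (simp add: R0_def)
    have "norm (c * w ^ degree P) - norm (Qval P Qc z w) \<le> S * norm w ^ m"
      using S[OF z w1] norm_triangle_ineq3[of "c * w ^ degree P" "Qval P Qc z w"]
      by (simp add: c_def m_def norm_minus_commute)
    then have lower: "norm w ^ m * (norm c * norm w - S) \<le> norm (Qval P Qc z w)"
      by (simp add: norm_mult norm_power D(1) algebra_simps)
    have "2 \<le> norm c * norm w - S"
      using w c by (simp add: R0_def divide_le_eq mult.commute)
    then have "norm w ^ m * 2 \<le> norm w ^ m * (norm c * norm w - S)" by (intro mult_left_mono) simp_all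
    moreover have "norm w \<le> norm w ^ m" using w1 D(2) by (metis power_increasing power_one_right)
    ultimately show ?thesis using lower by linarith
  qed
  moreover have "R0 \<ge> 1" by (simp add: R0_def)
  ultimately show ?thesis using that by blast
qed

lemma tendsto_Qval [tendsto_intros]:
  "(f \<longlongrightarrow> z) G \<Longrightarrow> (g \<longlongrightarrow> w) G \<Longrightarrow> ((\<lambda>x. Qval P Qc (f x) (g x)) \<longlongrightarrow> Qval P Qc z w) G"
  unfolding Qval_def by (intro tendsto_intros)

lemma tendsto_Qw [tendsto_intros]:
  "(f \<longlongrightarrow> z) G \<Longrightarrow> (g \<longlongrightarrow> w) G \<Longrightarrow> ((\<lambda>x. Qw P Qc (f x) (g x)) \<longlongrightarrow> Qw P Qc z w) G"
  unfolding Qw_def by (intro tendsto_intros)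

lemma tendsto_Qz [tendsto_intros]:
  "(f \<longlongrightarrow> z) G \<Longrightarrow> (g \<longlongrightarrow> w) G \<Longrightarrow> ((\<lambda>x. Qz P Qc (f x) (g x)) \<longlongrightarrow> Qz P Qc z w) G"
  unfolding Qz_def by (intro tendsto_intros)

lemma tendsto_poly_P_iter [tendsto_intros]:
  "(f \<longlongrightarrow> z) G \<Longrightarrow> ((\<lambda>x. (poly P ^^ n) (f x)) \<longlongrightarrow> (poly P ^^ n) z) G"
  by (induction n) (auto intro: tendsto_poly)

lemma tendsto_orbit_w [tendsto_intros]:
  "(f \<longlongrightarrow> z) G \<Longrightarrow> (g \<longlongrightarrow> w) G \<Longrightarrow> ((\<lambda>x. orbit_w n (f x) (g x)) \<longlongrightarrow> orbit_w n z w) G"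
  by (induction n) (auto intro: tendsto_intros)

lemma invariant_bidisc:
  obtains \<delta> \<eta> where "0 < \<delta>" "0 < \<eta>" "\<delta> \<le> e0" "\<eta> \<le> r"
    "\<And>z w. norm z < \<delta> \<Longrightarrow> norm w < \<eta> \<Longrightarrow> norm (poly P z) < \<delta> \<and> norm (Qval P Qc z w) < \<eta>"
proof -
  define \<beta> where "\<beta> = (1 + norm (poly (pderiv (Qc 0)) 0)) / 2"
  have \<beta>: "\<beta> < 1" "0 < \<beta>" using norm_Q0'_0_less_1 unfolding \<beta>_def by (auto simp: add_pos_nonneg)
  obtain \<delta>Q where \<delta>Q: "\<delta>Q > 0" "\<forall>w. norm w < \<delta>Q \<longrightarrow> norm (poly (Qc 0) w) \<le> \<beta> * norm w"
    using norm_le_mult_norm_near_zero[OF poly_Q0_0 poly_DERIV, of \<beta>] norm_Q0'_0_less_1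
    by (auto simp: \<beta>_def)
  obtain \<delta>P where \<delta>P: "\<delta>P > 0" "\<And>z. norm z < \<delta>P \<Longrightarrow> norm (poly P z) \<le> norm z"
    using poly_P_shrinks by blast
  obtain M where M: "M \<ge> 0"
    "\<And>z w. norm z \<le> 1 \<Longrightarrow> norm w \<le> 1 \<Longrightarrow> norm (Qval P Qc z w - poly (Qc 0) w) \<le> M * norm z"
    using Qval_minus_Q0_bound by blast
  \<comment> \<open>Q contracts the fibre direction by the factor \<beta> up to an error M |z|,
    which the choice of \<delta> absorbs\<close>
  define \<eta> where "\<eta> = min (min \<delta>Q r) 1 / 2"
  define \<delta> where "\<delta> = min (min \<delta>P e0) (min 1 ((1 - \<beta>) * \<eta> / (M + 1)))"
  have \<eta>: "0 < \<eta>" "\<eta> \<le> r" "\<eta> < \<delta>Q" "\<eta> \<le> 1" unfolding \<eta>_def using \<delta>Q r_pos by auto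
  have \<delta>: "0 < \<delta>" "\<delta> \<le> e0" unfolding \<delta>_def using \<delta>P e0_pos \<beta> \<eta> M by auto
  have "norm (poly P z) < \<delta> \<and> norm (Qval P Qc z w) < \<eta>" if z: "norm z < \<delta>" and w: "norm w < \<eta>" for z w
  proof
    show "norm (poly P z) < \<delta>" using \<delta>P(2)[of z] z unfolding \<delta>_def by force
    have z1: "norm z \<le> 1" using z unfolding \<delta>_def by linarith
    have "norm (Qval P Qc z w) \<le> norm (poly (Qc 0) w) + norm (Qval P Qc z w - poly (Qc 0) w)"
      by (metis add.commute diff_add_cancel norm_triangle_ineq)
    also have "\<dots> \<le> \<beta> * norm w + M * norm z"
      using \<delta>Q(2) M(2) z1 w \<eta> by (intro add_mono) auto
    also have "\<dots> < \<beta> * \<eta> + (1 - \<beta>) * \<eta>"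
    proof (rule add_less_le_mono)
      show "\<beta> * norm w < \<beta> * \<eta>" using \<beta> w by simp
      have "norm z \<le> (1 - \<beta>) * \<eta> / (M + 1)" using z unfolding \<delta>_def by linarith
      then have "M * norm z \<le> M * ((1 - \<beta>) * \<eta> / (M + 1))" by (rule mult_left_mono[OF _ M(1)])
      also have "\<dots> \<le> (1 - \<beta>) * \<eta>"
        using M(1) \<beta> \<eta> by (simp add: field_simps mult_left_mono)
      finally show "M * norm z \<le> (1 - \<beta>) * \<eta>" .
    qed
    also have "\<dots> = \<eta>" by (simp add: algebra_simps)
    finally show "norm (Qval P Qc z w) < \<eta>" .
  qed
  then show ?thesis using that \<delta> \<eta> by blast
qed

lemma preimage_in_bidisc_on_\<Sigma>0:
  assumes inv: "\<And>z w. norm z < \<delta> \<Longrightarrow> norm w < \<eta> \<Longrightarrow> norm (poly P z) < \<delta> \<and> norm (Qval P Qc z w) < \<eta>"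
    and "\<delta> \<le> e0" "\<eta> \<le> r"
    and "(z, w) \<in> preimages_\<Sigma>0" "norm z < \<delta>" "norm w < \<eta>"
  shows "w = f0 z"
proof -
  have orbit: "norm ((poly P ^^ n) z) < \<delta> \<and> norm (orbit_w n z w) < \<eta>" for n
    by (induction n) (use inv assms(5,6) in auto)
  have "(F ^^ n) (z, w) \<in> ball 0 e0 \<times> ball 0 r" for n
    using orbit[of n] assms(2,3) unfolding skew_iter by simp
  moreover have "z \<in> ball 0 e0" "w \<in> ball 0 r" using assms(2,3,5,6) by auto
  ultimately show ?thesis using strong_stable_iff fast_conv_preimages_\<Sigma>0[OF assms(4)] by blast
qed

lemma preimages_bounded_near_0:
  obtains \<delta> R where "0 < \<delta>" "\<delta> \<le> e0" "\<And>z. norm z < \<delta> \<Longrightarrow> norm (poly P z) \<le> norm z"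
    "\<And>z u. norm z < \<delta> \<Longrightarrow> (z, u) \<in> preimages_\<Sigma>0 \<Longrightarrow> norm u < R"
proof -
  obtain \<delta>P where \<delta>P: "\<delta>P > 0" "\<And>z. norm z < \<delta>P \<Longrightarrow> norm (poly P z) \<le> norm z"
    using poly_P_shrinks by blast
  define \<delta> where "\<delta> = min \<delta>P (min 1 e0)"
  have \<delta>: "0 < \<delta>" "\<delta> \<le> 1" "\<delta> \<le> e0" "\<delta> \<le> \<delta>P" unfolding \<delta>_def using \<delta>P e0_pos by auto
  obtain R0 where R0: "R0 \<ge> 1" "\<And>z w. norm z \<le> 1 \<Longrightarrow> R0 \<le> norm w \<Longrightarrow> 2 * norm w \<le> norm (Qval P Qc z w)"
    using Qval_escape by blast
  have "norm u < max R0 r" if z: "norm z < \<delta>" and pre: "(z, u) \<in> preimages_\<Sigma>0" for z u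
  proof (rule ccontr)
    assume "\<not> norm u < max R0 r"
    then have u: "R0 \<le> norm u" "r \<le> norm u" by auto
    have "norm ((poly P ^^ n) z) \<le> norm z" for n
    proof (induction n)
      case (Suc n)
      then show ?case using \<delta>P(2)[of "(poly P ^^ n) z"] z \<delta>(4) by simp
    qed simp
    then have small: "norm ((poly P ^^ n) z) \<le> 1" for n using z \<delta>(2) by (smt (verit))
    \<comment> \<open>an orbit starting outside the disc of radius max R0 r never returns to it, so never reaches \<Sigma>0\<close>
    have "norm u \<le> norm (orbit_w n z u)" for n
    proof (induction n)
      case (Suc n)
      then show ?case using R0 small[of n] u(1) by (simp add: order_trans[OF _ R0(2)])
    qed simp
    moreover obtain k where "(F ^^ k) (z, u) \<in> \<Sigma>0" using pre by (auto simp: preimages_\<Sigma>0_def)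
    then have "norm (orbit_w k z u) < r" using f0_in_ball by (auto simp: graph_on_def skew_iter)
    ultimately show False using u(2) by (meson not_le order_trans)
  qed
  then show ?thesis using that \<delta> \<delta>P(2) by force
qed

lemma preimage_limit_orbit_bounded:
  assumes shrink: "\<And>z. norm z < \<delta> \<Longrightarrow> norm (poly P z) \<le> norm z"
    and bound: "\<And>z u. norm z < \<delta> \<Longrightarrow> (z, u) \<in> preimages_\<Sigma>0 \<Longrightarrow> norm u < R"
    and "0 < \<delta>" and seq: "\<And>m. (zs m, us m) \<in> preimages_\<Sigma>0" "zs \<longlonglongrightarrow> 0" "us \<longlonglongrightarrow> c"
  shows "norm ((poly (Qc 0) ^^ N) c) \<le> R"
proof -
  have iter: "norm ((poly P ^^ n) z) \<le> norm z" if "norm z < \<delta>" for z n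
  proof (induction n)
    case (Suc n)
    then show ?case using shrink[of "(poly P ^^ n) z"] that by simp
  qed simp
  have "\<forall>\<^sub>F m in sequentially. norm (zs m) < \<delta>"
    using order_tendstoD(2)[OF tendsto_norm[OF seq(2)]] assms(3) by simp
  then have "\<forall>\<^sub>F m in sequentially. norm (orbit_w N (zs m) (us m)) \<le> R"
  proof eventually_elim
    case (elim m)
    have "((poly P ^^ N) (zs m), orbit_w N (zs m) (us m)) \<in> preimages_\<Sigma>0"
      using preimages_\<Sigma>0_iter[OF seq(1)] by (metis skew_iter)
    then show ?case using bound iter[OF elim] elim by (meson le_less_trans less_imp_le)
  qed
  moreover have "(\<lambda>m. orbit_w N (zs m) (us m)) \<longlonglongrightarrow> orbit_w N 0 c"
    using seq(2,3) by (intro tendsto_intros)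
  ultimately show ?thesis using Lim_norm_ubound[of sequentially] by (simp add: orbit_w_0)
qed

lemma preimage_limit_in_basin_hits_origin:
  assumes seq: "\<And>m. (zs m, us m) \<in> preimages_\<Sigma>0" "zs \<longlonglongrightarrow> 0" "us \<longlonglongrightarrow> c"
    and basin: "c \<in> slice (basinF P Qc) 0"
  shows "\<exists>N\<ge>1. (F ^^ N) (0, c) = (0, 0)"
proof -
  obtain \<delta> \<eta> where inv: "0 < \<delta>" "0 < \<eta>" "\<delta> \<le> e0" "\<eta> \<le> r"
      "\<And>z w. norm z < \<delta> \<Longrightarrow> norm w < \<eta> \<Longrightarrow> norm (poly P z) < \<delta> \<and> norm (Qval P Qc z w) < \<eta>"
    using invariant_bidisc by blast
  have "(\<lambda>n. (F ^^ n) (0, c)) \<longlonglongrightarrow> 0" using basin by (simp add: slice_def basinF_def zero_prod_def)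
  from order_tendstoD(2)[OF tendsto_norm[OF this]] inv(2)
  obtain N0 where N0: "\<And>n. n \<ge> N0 \<Longrightarrow> norm ((F ^^ n) (0, c)) < \<eta>"
    by (auto simp: eventually_sequentially)
  define N where "N = Suc N0"
  have "norm ((F ^^ N) (0, c)) < \<eta>" by (rule N0) (simp add: N_def)
  then have small: "norm (orbit_w N 0 c) < \<eta>"
    unfolding skew_iter using norm_snd_le le_less_trans by blast
  have lim: "(\<lambda>m. orbit_w N (zs m) (us m)) \<longlonglongrightarrow> orbit_w N 0 c"
    and lim_z: "(\<lambda>m. (poly P ^^ N) (zs m)) \<longlonglongrightarrow> 0"
    using seq(2,3) tendsto_poly_P_iter[OF seq(2), of N]
    by (auto intro: tendsto_intros simp: poly_P_iter_0)
  have "\<forall>\<^sub>F m in sequentially. norm ((poly P ^^ N) (zs m)) < \<delta>"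
    using order_tendstoD(2)[OF tendsto_norm[OF lim_z]] inv(1) by simp
  moreover have "\<forall>\<^sub>F m in sequentially. norm (orbit_w N (zs m) (us m)) < \<eta>"
    using order_tendstoD(2)[OF tendsto_norm[OF lim] small] .
  \<comment> \<open>near the origin the N-th images lie in the invariant bidisc, hence on the strong stable manifold\<close>
  ultimately have on_\<Sigma>0: "\<forall>\<^sub>F m in sequentially. orbit_w N (zs m) (us m) = f0 ((poly P ^^ N) (zs m))"
  proof eventually_elim
    case (elim m)
    have "((poly P ^^ N) (zs m), orbit_w N (zs m) (us m)) \<in> preimages_\<Sigma>0"
      using preimages_\<Sigma>0_iter[OF seq(1)] by (metis skew_iter)
    then show ?case using preimage_in_bidisc_on_\<Sigma>0[OF inv(5) inv(3,4)] elim by blast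
  qed
  have "isCont f0 0"
    using f0_holomorphic e0_pos holomorphic_on_imp_continuous_on continuous_on_interior by fastforce
  then have "(\<lambda>m. f0 ((poly P ^^ N) (zs m))) \<longlonglongrightarrow> 0"
    using isCont_tendsto_compose[OF _ lim_z] f0_0 by fastforce
  then have "(\<lambda>m. orbit_w N (zs m) (us m)) \<longlonglongrightarrow> 0"
    using tendsto_cong[OF on_\<Sigma>0] by simp
  then have "orbit_w N 0 c = 0" using lim LIMSEQ_unique by blast
  then have "(F ^^ N) (0, c) = (0, 0)" by (simp add: skew_iter poly_P_iter_0)
  then show ?thesis by (intro exI[of _ N]) (simp add: N_def)
qed

lemma preimage_limit_not_critical:
  assumes shrink: "\<And>z. norm z < \<delta> \<Longrightarrow> norm (poly P z) \<le> norm z"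
    and bound: "\<And>z u. norm z < \<delta> \<Longrightarrow> (z, u) \<in> preimages_\<Sigma>0 \<Longrightarrow> norm u < R" and "0 < \<delta>"
    and seq: "\<And>m. (zs m, us m) \<in> preimages_\<Sigma>0" "zs \<longlonglongrightarrow> 0" "us \<longlonglongrightarrow> c"
  shows "Qw P Qc 0 c \<noteq> 0"
proof
  assume crit: "Qw P Qc 0 c = 0"
  show False
  proof (cases "c \<in> slice (basinF P Qc) 0")
    case True
    then show False
      using preimage_limit_in_basin_hits_origin[OF seq] critical_not_preimage_origin[OF True crit]
    by blast
  next
    case False
    have "filterlim (\<lambda>n. norm ((poly (Qc 0) ^^ n) c)) at_top sequentially"
      using filterlim_at_infinity_imp_norm_at_top[OF critical_escapes[OF False crit]] .
    then have "\<forall>\<^sub>F n in sequentially. R + 1 \<le> norm ((poly (Qc 0) ^^ n) c)"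
      by (simp add: filterlim_at_top)
    then obtain N where "R + 1 \<le> norm ((poly (Qc 0) ^^ N) c)"
      by (auto simp: eventually_sequentially)
    then show False
      using preimage_limit_orbit_bounded[OF shrink bound \<open>0 < \<delta>\<close> seq, where N=N] by simp
  qed
qed

lemma Qw_nonzero_on_preimages_near_0:
  assumes shrink: "\<And>z. norm z < \<delta> \<Longrightarrow> norm (poly P z) \<le> norm z"
    and bound: "\<And>z u. norm z < \<delta> \<Longrightarrow> (z, u) \<in> preimages_\<Sigma>0 \<Longrightarrow> norm u < R" and \<delta>: "0 < \<delta>"
  shows "\<exists>\<epsilon>>0. \<epsilon> \<le> \<delta> \<and> (\<forall>z u. norm z < \<epsilon> \<longrightarrow> (z, u) \<in> preimages_\<Sigma>0 \<longrightarrow> Qw P Qc z u \<noteq> 0)"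
proof (rule ccontr)
  assume contra: "\<not> ?thesis"
  have "\<forall>m. \<exists>p. norm (fst p) < min \<delta> (inverse (real (Suc m))) \<and> p \<in> preimages_\<Sigma>0 \<and>
      Qw P Qc (fst p) (snd p) = 0"
  proof
    fix m
    have "0 < min \<delta> (inverse (real (Suc m)))" "min \<delta> (inverse (real (Suc m))) \<le> \<delta>" using \<delta> by auto
    then obtain z u where
      "norm z < min \<delta> (inverse (real (Suc m)))" "(z, u) \<in> preimages_\<Sigma>0" "Qw P Qc z u = 0"
      using contra by blast
    then show "\<exists>p. norm (fst p) < min \<delta> (inverse (real (Suc m))) \<and> p \<in> preimages_\<Sigma>0 \<and>
        Qw P Qc (fst p) (snd p) = 0" by (intro exI[of _ "(z, u)"]) simp
  qed
  then obtain ps where ps: "\<And>m. norm (fst (ps m)) < min \<delta> (inverse (real (Suc m)))"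
      "\<And>m. ps m \<in> preimages_\<Sigma>0" "\<And>m. Qw P Qc (fst (ps m)) (snd (ps m)) = 0"
    unfolding choice_iff by blast
  define zs where "zs m = fst (ps m)" for m
  define us where "us m = snd (ps m)" for m
  have pre: "(zs m, us m) \<in> preimages_\<Sigma>0" for m using ps(2) by (simp add: zs_def us_def)
  have "zs \<longlonglongrightarrow> 0" using ps(1) by (intro tendsto_of_dist_less_inverse) (simp add: zs_def)
  have "range us \<subseteq> cball 0 R"
    using bound[OF _ pre] ps(1) by (force simp: zs_def us_def less_imp_le)
  then obtain c \<rho> where \<rho>: "strict_mono \<rho>" "(us \<circ> \<rho>) \<longlonglongrightarrow> c"
    using bounded_imp_convergent_subsequence[OF bounded_subset[OF bounded_cball]] by blast
  have zs\<rho>: "(zs \<circ> \<rho>) \<longlonglongrightarrow> 0" using LIMSEQ_subseq_LIMSEQ[OF \<open>zs \<longlonglongrightarrow> 0\<close> \<rho>(1)] .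
  have pre\<rho>: "((zs \<circ> \<rho>) m, (us \<circ> \<rho>) m) \<in> preimages_\<Sigma>0" for m using pre by simp
  have "(\<lambda>m. Qw P Qc ((zs \<circ> \<rho>) m) ((us \<circ> \<rho>) m)) \<longlonglongrightarrow> Qw P Qc 0 c"
    using zs\<rho> \<rho>(2) by (intro tendsto_intros)
  moreover have "(\<lambda>m. Qw P Qc ((zs \<circ> \<rho>) m) ((us \<circ> \<rho>) m)) = (\<lambda>m. 0)"
    using ps(3) by (simp add: zs_def us_def)
  ultimately have "Qw P Qc 0 c = 0" using LIMSEQ_unique tendsto_const by metis
  moreover have "Qw P Qc 0 c \<noteq> 0"
    using shrink bound \<delta> pre\<rho> zs\<rho> \<rho>(2) by (rule preimage_limit_not_critical)
  ultimately show False by blast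
qed

lemma good_disc:
  obtains \<epsilon> R where "0 < \<epsilon>" "\<epsilon> \<le> e0" "\<And>z. norm z < \<epsilon> \<Longrightarrow> norm (poly P z) < \<epsilon>"
    "\<And>z u. norm z < \<epsilon> \<Longrightarrow> (z, u) \<in> preimages_\<Sigma>0 \<Longrightarrow> Qw P Qc z u \<noteq> 0 \<and> norm u < R"
proof -
  obtain \<delta> R where \<delta>: "0 < \<delta>" "\<delta> \<le> e0"
    and shrink: "\<And>z. norm z < \<delta> \<Longrightarrow> norm (poly P z) \<le> norm z"
    and bound: "\<And>z u. norm z < \<delta> \<Longrightarrow> (z, u) \<in> preimages_\<Sigma>0 \<Longrightarrow> norm u < R"
    using preimages_bounded_near_0 by blast
  have "\<exists>\<epsilon>>0. \<epsilon> \<le> \<delta> \<and> (\<forall>z u. norm z < \<epsilon> \<longrightarrow> (z, u) \<in> preimages_\<Sigma>0 \<longrightarrow> Qw P Qc z u \<noteq> 0)"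
    using shrink bound \<delta>(1) by (rule Qw_nonzero_on_preimages_near_0)
  then obtain \<epsilon> where \<epsilon>: "0 < \<epsilon>" "\<epsilon> \<le> \<delta>"
    and crit: "\<And>z u. norm z < \<epsilon> \<Longrightarrow> (z, u) \<in> preimages_\<Sigma>0 \<Longrightarrow> Qw P Qc z u \<noteq> 0" by blast
  show ?thesis
  proof (rule that[of \<epsilon> R])
    show "norm (poly P z) < \<epsilon>" if "norm z < \<epsilon>" for z using shrink[of z] that \<epsilon>(2) by simp
    show "Qw P Qc z u \<noteq> 0 \<and> norm u < R" if "norm z < \<epsilon>" "(z, u) \<in> preimages_\<Sigma>0" for z u
      using crit[OF that] bound[OF _ that(2)] that(1) \<epsilon>(2) by simp
  qed (use \<epsilon> \<delta> in auto)
qed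

lemma Qval_has_derivative:
  "((\<lambda>q. Qval P Qc (fst q) (snd q)) has_derivative
     (\<lambda>v. Qz P Qc (fst q) (snd q) * fst v + Qw P Qc (fst q) (snd q) * snd v)) (at q)"
proof -
  have poly_snd: "((\<lambda>x. poly p (snd x)) has_derivative (\<lambda>v. poly (pderiv p) (snd q) * snd v)) (at q)"
    for p :: "complex poly"
    using has_derivative_compose[OF has_derivative_snd[OF has_derivative_ident[of "at q"]]
        poly_DERIV[of p "snd q", unfolded has_field_derivative_def]] by simp
  have "((\<lambda>x. poly (Qc j) (snd x) * fst x ^ j) has_derivative
      (\<lambda>v. poly (Qc j) (snd q) * (of_nat j * fst v * fst q ^ (j - 1)) +
           poly (pderiv (Qc j)) (snd q) * snd v * fst q ^ j)) (at q)" for j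
    using has_derivative_mult[OF poly_snd
        has_derivative_power[OF has_derivative_fst[OF has_derivative_ident]]] by simp
  then have deriv: "((\<lambda>q. Qval P Qc (fst q) (snd q)) has_derivative
      (\<lambda>v. \<Sum>j\<le>degree P. poly (Qc j) (snd q) * (of_nat j * fst v * fst q ^ (j - 1)) +
           poly (pderiv (Qc j)) (snd q) * snd v * fst q ^ j)) (at q)"
    unfolding Qval_def by (intro has_derivative_sum)
  have Qz_sum: "(\<Sum>j\<le>degree P. poly (Qc j) w * (of_nat j * a * z ^ (j - 1))) = Qz P Qc z w * a"
    for z w a :: complex
    unfolding Qz_def atMost_atLeast0
    by (subst sum.atLeast_Suc_atMost) (auto simp: sum_distrib_left sum_distrib_right algebra_simps)
  show ?thesis
  proof (rule has_derivative_eq_rhs[OF deriv], rule ext)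
    fix v :: "complex \<times> complex"
    show "(\<Sum>j\<le>degree P. poly (Qc j) (snd q) * (of_nat j * fst v * fst q ^ (j - 1)) +
           poly (pderiv (Qc j)) (snd q) * snd v * fst q ^ j) =
        Qz P Qc (fst q) (snd q) * fst v + Qw P Qc (fst q) (snd q) * snd v"
      unfolding sum.distrib Qz_sum[where z = "fst q" and w = "snd q" and a = "fst v"]
      by (simp add: Qw_def sum_distrib_left sum_distrib_right mult_ac)
  qed
qed

lemma poly_P_iter_has_derivative:
  "((poly P ^^ n) has_field_derivative (\<Prod>j<n. poly (pderiv P) ((poly P ^^ j) z))) (at z)"
proof (induction n arbitrary: z)
  case (Suc n)
  show ?case
    using DERIV_chain[OF poly_DERIV Suc.IH] by (simp add: o_def mult.commute)
qed (simp add: id_def DERIV_ident)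

definition orbit_w_du :: "nat \<Rightarrow> complex \<times> complex \<Rightarrow> complex" where
  "orbit_w_du n p = (\<Prod>j<n. Qw P Qc ((poly P ^^ j) (fst p)) (orbit_w j (fst p) (snd p)))"

lemma isCont_orbit_w_du: "isCont (orbit_w_du n) p"
  unfolding isCont_def orbit_w_du_def
  by (intro tendsto_intros tendsto_fst tendsto_snd tendsto_ident_at)

lemma orbit_w_has_derivative:
  "\<exists>A. (\<forall>p. isCont A p) \<and>
     (\<forall>p. ((\<lambda>p. orbit_w n (fst p) (snd p)) has_derivative
        (\<lambda>v. A p * fst v + orbit_w_du n p * snd v)) (at p))"
proof (induction n)
  case 0
  show ?case
    by (rule exI[of _ "\<lambda>p. 0"])
       (auto simp: orbit_w_du_def intro: has_derivative_snd[OF has_derivative_ident])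
next
  case (Suc n)
  then obtain A where A: "\<And>p. isCont A p"
    "\<And>p. ((\<lambda>p. orbit_w n (fst p) (snd p)) has_derivative
        (\<lambda>v. A p * fst v + orbit_w_du n p * snd v)) (at p)"
    by blast
  define D where "D z = (\<Prod>j<n. poly (pderiv P) ((poly P ^^ j) z))" for z
  define \<psi> where "\<psi> p = ((poly P ^^ n) (fst p), orbit_w n (fst p) (snd p))" for p
  have \<psi>: "(\<psi> has_derivative (\<lambda>v. (D (fst p) * fst v, A p * fst v + orbit_w_du n p * snd v))) (at p)" for p
  proof -
    have "((\<lambda>p. (poly P ^^ n) (fst p)) has_derivative (\<lambda>v. D (fst p) * fst v)) (at p)"
      using has_derivative_compose[OF has_derivative_fst[OF has_derivative_ident]
          poly_P_iter_has_derivative[unfolded has_field_derivative_def]] by (simp add: D_def)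
    from has_derivative_Pair[OF this A(2)] show ?thesis unfolding \<psi>_def by simp
  qed
  define A' where
    "A' p = Qz P Qc (fst (\<psi> p)) (snd (\<psi> p)) * D (fst p) + Qw P Qc (fst (\<psi> p)) (snd (\<psi> p)) * A p"
    for p
  have "((\<lambda>p. orbit_w (Suc n) (fst p) (snd p)) has_derivative
      (\<lambda>v. A' p * fst v + orbit_w_du (Suc n) p * snd v)) (at p)" for p
  proof -
    have "(\<lambda>p. orbit_w (Suc n) (fst p) (snd p)) = (\<lambda>p. Qval P Qc (fst (\<psi> p)) (snd (\<psi> p)))"
      by (simp add: \<psi>_def fun_eq_iff)
    then show ?thesis
      using has_derivative_compose[OF \<psi> Qval_has_derivative[of "\<psi> p"]]
      by (simp add: A'_def orbit_w_du_def \<psi>_def algebra_simps)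
  qed
  moreover have "isCont A' p" for p
  proof -
    have "isCont (\<lambda>p. Qz P Qc (fst (\<psi> p)) (snd (\<psi> p))) p" "isCont (\<lambda>p. Qw P Qc (fst (\<psi> p)) (snd (\<psi> p))) p"
      "isCont (\<lambda>p. D (fst p)) p"
      unfolding isCont_def \<psi>_def D_def fst_conv snd_conv
      by (intro tendsto_intros tendsto_fst tendsto_snd tendsto_ident_at)+
    then show ?thesis unfolding A'_def using A(1) by (intro continuous_intros)
  qed
  ultimately show ?case by blast
qed

end

section \<open>Preimages of the strong stable manifold over a disc\<close>

locale skew_classA_disc = skew_classA +
  fixes \<epsilon> R :: real
  assumes \<epsilon>: "0 < \<epsilon>" "\<epsilon> \<le> e0"
    and poly_P_disc: "\<And>z. norm z < \<epsilon> \<Longrightarrow> norm (poly P z) < \<epsilon>"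
    and preimages_regular: "\<And>z u. norm z < \<epsilon> \<Longrightarrow> (z, u) \<in> preimages_\<Sigma>0 \<Longrightarrow> Qw P Qc z u \<noteq> 0 \<and> norm u < R"
begin

definition disc_preimage :: "nat \<Rightarrow> (complex \<times> complex) set" where
  "disc_preimage K = {p. fst p \<in> ball 0 \<epsilon> \<and> (F ^^ K) p \<in> \<Sigma>0}"

definition graph_defect :: "nat \<Rightarrow> complex \<times> complex \<Rightarrow> complex" where
  "graph_defect K p = orbit_w K (fst p) (snd p) - f0 ((poly P ^^ K) (fst p))"

lemma poly_P_iter_disc: "z \<in> ball 0 \<epsilon> \<Longrightarrow> (poly P ^^ n) z \<in> ball 0 \<epsilon>"
  by (induction n) (auto intro: poly_P_disc)

lemma disc_preimage_eq: "disc_preimage K = {p \<in> ball 0 \<epsilon> \<times> UNIV. graph_defect K p = 0}"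
proof -
  have "(F ^^ K) (z, u) \<in> \<Sigma>0 \<longleftrightarrow> graph_defect K (z, u) = 0" if "z \<in> ball 0 \<epsilon>" for z u
    using poly_P_iter_disc[OF that, of K] \<epsilon>(2)
    by (auto simp: skew_iter graph_on_def graph_defect_def)
  then show ?thesis by (auto simp: disc_preimage_def)
qed

lemma disc_preimage_mono: "K \<le> K' \<Longrightarrow> disc_preimage K \<subseteq> disc_preimage K'"
  by (auto simp: disc_preimage_def intro: skew_iter_\<Sigma>0)

lemma disc_preimage_origin: "(0, v) \<in> disc_preimage K \<longleftrightarrow> (F ^^ K) (0, v) = (0, 0)"
  using \<epsilon> e0_pos f0_0 by (auto simp: disc_preimage_def skew_iter poly_P_iter_0 graph_on_def)

lemma orbit_w_du_nonzero:
  assumes "p \<in> disc_preimage K" shows "orbit_w_du K p \<noteq> 0"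
proof -
  have "p \<in> preimages_\<Sigma>0" using assms by (auto simp: disc_preimage_def preimages_\<Sigma>0_def)
  then have "((poly P ^^ j) (fst p), orbit_w j (fst p) (snd p)) \<in> preimages_\<Sigma>0" for j
    using preimages_\<Sigma>0_iter by (metis skew_iter prod.collapse)
  moreover have "norm ((poly P ^^ j) (fst p)) < \<epsilon>" for j
    using poly_P_iter_disc assms by (simp add: disc_preimage_def)
  ultimately show ?thesis using preimages_regular by (simp add: orbit_w_du_def)
qed

lemma graph_defect_has_derivative:
  obtains A where "continuous_on (ball 0 \<epsilon> \<times> UNIV) A"
    "\<And>p. p \<in> ball 0 \<epsilon> \<times> UNIV \<Longrightarrow>
      (graph_defect K has_derivative (\<lambda>v. A p * fst v + orbit_w_du K p * snd v)) (at p)"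
proof -
  obtain A where A: "\<And>p. isCont A p"
    "\<And>p. ((\<lambda>p. orbit_w K (fst p) (snd p)) has_derivative
        (\<lambda>v. A p * fst v + orbit_w_du K p * snd v)) (at p)"
    using orbit_w_has_derivative by blast
  define D where "D z = (\<Prod>j<K. poly (pderiv P) ((poly P ^^ j) z))" for z
  define A' where "A' p = A p - deriv f0 ((poly P ^^ K) (fst p)) * D (fst p)" for p
  have in_e0: "(poly P ^^ K) (fst p) \<in> ball 0 e0" if "p \<in> ball 0 \<epsilon> \<times> UNIV" for p
    using poly_P_iter_disc[of "fst p" K] that \<epsilon>(2) by auto
  have "(graph_defect K has_derivative (\<lambda>v. A' p * fst v + orbit_w_du K p * snd v)) (at p)"
    if p: "p \<in> ball 0 \<epsilon> \<times> UNIV" for p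
  proof -
    have "((\<lambda>p. (poly P ^^ K) (fst p)) has_derivative (\<lambda>v. D (fst p) * fst v)) (at p)"
      using has_derivative_compose[OF has_derivative_fst[OF has_derivative_ident]
          poly_P_iter_has_derivative[unfolded has_field_derivative_def]] by (simp add: D_def)
    moreover have "(f0 has_derivative (*) (deriv f0 ((poly P ^^ K) (fst p)))) (at ((poly P ^^ K) (fst p)))"
      using holomorphic_derivI[OF f0_holomorphic open_ball in_e0[OF p]]
      by (simp add: has_field_derivative_def)
    ultimately have "((\<lambda>p. f0 ((poly P ^^ K) (fst p))) has_derivative
        (\<lambda>v. deriv f0 ((poly P ^^ K) (fst p)) * (D (fst p) * fst v))) (at p)"
      using has_derivative_compose by fastforce
    from has_derivative_diff[OF A(2) this] show ?thesis
      unfolding graph_defect_def[abs_def]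
      by (rule has_derivative_eq_rhs) (simp add: fun_eq_iff A'_def algebra_simps)
  qed
  moreover have "isCont A' p" if p: "p \<in> ball 0 \<epsilon> \<times> UNIV" for p
  proof -
    have "continuous_on (ball 0 e0) (deriv f0)"
      by (intro holomorphic_on_imp_continuous_on holomorphic_deriv f0_holomorphic open_ball)
    then have "isCont (deriv f0) ((poly P ^^ K) (fst p))"
      using continuous_on_eq_continuous_at[OF open_ball] in_e0[OF p] by blast
    moreover have "isCont (\<lambda>p. (poly P ^^ K) (fst p)) p" "isCont (\<lambda>p. D (fst p)) p"
      unfolding isCont_def D_def by (intro tendsto_intros tendsto_fst tendsto_ident_at)+
    ultimately have "isCont (\<lambda>p. deriv f0 ((poly P ^^ K) (fst p))) p" "isCont (\<lambda>p. D (fst p)) p"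
      using isCont_o2 by blast+
    then show ?thesis unfolding A'_def using A(1) by (intro continuous_intros)
  qed
  then have "continuous_on (ball 0 \<epsilon> \<times> UNIV) A'" by (intro continuous_at_imp_continuous_on) blast
  ultimately show ?thesis using that by blast
qed

lemma disc_preimage_local_graph:
  assumes "(z0, u0) \<in> disc_preimage K"
  shows "\<exists>\<delta> \<eta> h. local_graph (disc_preimage K) z0 u0 \<delta> \<eta> h \<and> h field_differentiable (at z0)"
proof -
  obtain A where A: "continuous_on (ball 0 \<epsilon> \<times> UNIV) A"
    "\<And>p. p \<in> ball 0 \<epsilon> \<times> UNIV \<Longrightarrow>
      (graph_defect K has_derivative (\<lambda>v. A p * fst v + orbit_w_du K p * snd v)) (at p)"
    using graph_defect_has_derivative by blast
  have "(z0, u0) \<in> ball 0 \<epsilon> \<times> UNIV" "graph_defect K (z0, u0) = 0"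
    using assms by (auto simp: disc_preimage_eq)
  from implicit_function_complex[OF open_Times[OF open_ball open_UNIV] this A(2) A(1)
      continuous_at_imp_continuous_on[OF ballI[OF isCont_orbit_w_du]] orbit_w_du_nonzero[OF assms]]
  show ?thesis unfolding disc_preimage_eq field_differentiable_def by blast
qed

lemma covering_disc_preimage: "covering_space (disc_preimage K) fst (ball 0 \<epsilon>)"
proof (rule covering_space_fst_of_local_graphs)
  show "disc_preimage K \<subseteq> ball 0 \<epsilon> \<times> UNIV" by (auto simp: disc_preimage_def)
  show "disc_preimage K \<noteq> {}"
  proof -
    have "(F ^^ K) (0, 0) = (0, 0)" by (induction K) (simp_all add: skew_def Qval_0 poly_P_0 poly_Q0_0)
    then show ?thesis using disc_preimage_origin by blast
  qed
  obtain A where "\<And>p. p \<in> ball 0 \<epsilon> \<times> UNIV \<Longrightarrow>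
      (graph_defect K has_derivative (\<lambda>v. A p * fst v + orbit_w_du K p * snd v)) (at p)"
    using graph_defect_has_derivative by blast
  then have "continuous_on (ball 0 \<epsilon> \<times> UNIV) (graph_defect K)"
    by (intro continuous_at_imp_continuous_on) (blast intro: has_derivative_continuous)
  then show "closedin (top_of_set (ball 0 \<epsilon> \<times> UNIV)) (disc_preimage K)"
    unfolding disc_preimage_eq by (rule continuous_closedin_preimage_constant)
  have "snd ` disc_preimage K \<subseteq> ball 0 R"
    using preimages_regular by (force simp: disc_preimage_def preimages_\<Sigma>0_def)
  then show "bounded (snd ` disc_preimage K)" by (rule bounded_subset[OF bounded_ball])
  show "\<exists>\<delta> \<eta> h. local_graph (disc_preimage K) z u \<delta> \<eta> h" if "(z, u) \<in> disc_preimage K" for z u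
    using disc_preimage_local_graph[OF that] by blast
qed auto

definition disc_section :: "nat \<Rightarrow> (complex \<Rightarrow> complex) \<Rightarrow> bool" where
  "disc_section K h \<longleftrightarrow> continuous_on (ball 0 \<epsilon>) h \<and> (\<forall>z\<in>ball 0 \<epsilon>. (z, h z) \<in> disc_preimage K)"

lemma disc_section_exists:
  assumes "(z1, u1) \<in> disc_preimage K" obtains h where "disc_section K h" "h z1 = u1"
  using covering_space_fst_section[OF covering_disc_preimage convex_imp_simply_connected[OF convex_ball]
      open_imp_locally_path_connected[OF open_ball] assms]
  unfolding disc_section_def by metis

lemma disc_sections_agree:
  assumes "disc_section K1 h1" "disc_section K2 h2" "z1 \<in> ball 0 \<epsilon>" "h1 z1 = h2 z1" "z \<in> ball 0 \<epsilon>"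
  shows "h1 z = h2 z"
proof -
  have "\<And>z. z \<in> ball 0 \<epsilon> \<Longrightarrow> (z, h1 z) \<in> disc_preimage (max K1 K2)"
    "\<And>z. z \<in> ball 0 \<epsilon> \<Longrightarrow> (z, h2 z) \<in> disc_preimage (max K1 K2)"
    using assms(1,2) disc_preimage_mono[of K1 "max K1 K2"] disc_preimage_mono[of K2 "max K1 K2"]
    by (auto simp: disc_section_def)
  then show ?thesis
    using covering_space_fst_section_unique[OF covering_disc_preimage[of "max K1 K2"], of h1 h2 z1 z]
      assms
    by (simp add: disc_section_def)
qed

lemma disc_section_holomorphic: "disc_section K h \<Longrightarrow> h holomorphic_on ball 0 \<epsilon>"
  unfolding disc_section_def
  by (blast intro: holomorphic_on_of_local_graphs[OF open_ball] disc_preimage_local_graph)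

text \<open>\<open>branch v\<close> is meaningful only when \<open>(0, v)\<close> is a preimage of the origin.\<close>

definition branch :: "complex \<Rightarrow> complex \<Rightarrow> complex" where
  "branch v = (SOME h. h 0 = v \<and> (\<exists>K. disc_section K h))"

lemma branch_section:
  assumes "(F ^^ k) (0, v) = (0, 0)"
  shows "branch v 0 = v" and "\<exists>K. disc_section K (branch v)"
proof -
  obtain h where "disc_section k h" "h 0 = v"
    using disc_section_exists disc_preimage_origin assms by blast
  then have "\<exists>h. h 0 = v \<and> (\<exists>K. disc_section K h)" by blast
  from someI_ex[OF this] show "branch v 0 = v" "\<exists>K. disc_section K (branch v)"
    unfolding branch_def by blast+
qed

lemma branch_holomorphic: "(F ^^ k) (0, v) = (0, 0) \<Longrightarrow> branch v holomorphic_on ball 0 \<epsilon>"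
  using branch_section(2) disc_section_holomorphic by blast

lemma branch_graph_preimage:
  assumes "(F ^^ k) (0, v) = (0, 0)" shows "\<exists>K. (F ^^ K) ` graph_on \<epsilon> (branch v) \<subseteq> \<Sigma>0"
proof -
  obtain K where "disc_section K (branch v)" using branch_section(2)[OF assms] by blast
  then have "(F ^^ K) ` graph_on \<epsilon> (branch v) \<subseteq> \<Sigma>0"
    by (auto simp: graph_on_def disc_section_def disc_preimage_def)
  then show ?thesis by blast
qed

lemma branch_graphs_disjoint:
  assumes "(F ^^ k) (0, v) = (0, 0)" "(F ^^ k') (0, v') = (0, 0)" "v \<noteq> v'"
  shows "graph_on \<epsilon> (branch v) \<inter> graph_on \<epsilon> (branch v') = {}"
proof (rule equals0I)
  fix p assume "p \<in> graph_on \<epsilon> (branch v) \<inter> graph_on \<epsilon> (branch v')"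
  then obtain z where "z \<in> ball 0 \<epsilon>" "branch v z = branch v' z" by (auto simp: graph_on_def)
  then have "branch v 0 = branch v' 0"
    using assms(1,2) branch_section(2) disc_sections_agree \<epsilon>(1) by (metis centre_in_ball)
  then show False using assms branch_section(1) by metis
qed

lemma preimage_on_branch:
  assumes "z \<in> ball 0 \<epsilon>" and "(F ^^ k) (z, u) \<in> \<Sigma>0"
  shows "\<exists>v. (\<exists>k. (F ^^ k) (0, v) = (0, 0)) \<and> u = branch v z"
proof -
  have "(z, u) \<in> disc_preimage k" using assms by (simp add: disc_preimage_def)
  then obtain h where h: "disc_section k h" "h z = u" by (rule disc_section_exists)
  then have "(0, h 0) \<in> disc_preimage k" using \<epsilon>(1) by (simp add: disc_section_def)
  then have origin: "(F ^^ k) (0, h 0) = (0, 0)" by (simp add: disc_preimage_origin)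
  then have "branch (h 0) z = h z"
    using branch_section[OF origin] disc_sections_agree h(1) assms(1) \<epsilon>(1) by (metis centre_in_ball)
  then show ?thesis using origin h(2) by metis
qed

end

theorem lemma3p6:
  fixes P :: "complex poly" and Qc :: "nat \<Rightarrow> complex poly"
    and e0 r :: real and f0 :: "complex \<Rightarrow> complex"
  assumes "classA P Qc"
    and "local_strong_stable P Qc e0 r f0"
  shows "\<exists>\<epsilon>>0. \<exists>f :: complex \<Rightarrow> complex \<Rightarrow> complex.
    (\<forall>v. (\<exists>k. (skew P Qc ^^ k) (0, v) = (0, 0)) \<longrightarrow>
        f v holomorphic_on ball 0 \<epsilon> \<and> f v 0 = v \<and>
        (\<exists>k. (skew P Qc ^^ k) ` graph_on \<epsilon> (f v) \<subseteq> graph_on e0 f0)) \<and>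
    (\<forall>v v'. (\<exists>k. (skew P Qc ^^ k) (0, v) = (0, 0)) \<and> (\<exists>k. (skew P Qc ^^ k) (0, v') = (0, 0))
        \<and> v \<noteq> v' \<longrightarrow> graph_on \<epsilon> (f v) \<inter> graph_on \<epsilon> (f v') = {}) \<and>
    (\<forall>z u. z \<in> ball 0 \<epsilon> \<and> (\<exists>k. (skew P Qc ^^ k) (z, u) \<in> graph_on e0 f0) \<longrightarrow>
        (\<exists>v. (\<exists>k. (skew P Qc ^^ k) (0, v) = (0, 0)) \<and> u = f v z))"
proof -
  interpret skew_classA P Qc e0 r f0 using assms by unfold_locales
  obtain \<epsilon> R where "0 < \<epsilon>" "\<epsilon> \<le> e0" "\<And>z. norm z < \<epsilon> \<Longrightarrow> norm (poly P z) < \<epsilon>"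
    "\<And>z u. norm z < \<epsilon> \<Longrightarrow> (z, u) \<in> preimages_\<Sigma>0 \<Longrightarrow> Qw P Qc z u \<noteq> 0 \<and> norm u < R"
    using good_disc by metis
  then interpret skew_classA_disc P Qc e0 r f0 \<epsilon> R by unfold_locales
  show ?thesis
  proof (intro exI[of _ \<epsilon>] conjI exI[of _ branch] allI impI)
    show "0 < \<epsilon>" by (fact \<open>0 < \<epsilon>\<close>)
  qed (use branch_section branch_holomorphic branch_graph_preimage branch_graphs_disjoint
      preimage_on_branch in metis)+
qed

end
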